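(* Let $\mathcal G=(N,\Sigma,S,P)$ be a normalized spine grammar with spine direction $d$, and let $L_1=\{w\in\mathrm{Next}(\mathcal S(\mathcal G))\mid |w|=1\}$. Then there exists a pop-normalized MPDA $\mathcal A$ with $L(\mathcal A)\cup L_1=\mathrm{Next}(\mathcal S(\mathcal G))$. Moreover, the tree languages $\mathcal F(L(\mathcal A)\cup L_1)_S$ and $T(\mathcal G)$ coincide modulo relabeling, i.e. there is a relabeling $\rho$ with $\rho(\mathcal F(L(\mathcal A)\cup L_1)_S)=T(\mathcal G)$.
   Context: Spine grammar / normalized: $\mathcal G=(N,\Sigma,S,P)$ with $N=N_0\cup N_1$ (nullary/unary nonterminals), terminals $\Sigma=\Sigma_0\cup\Sigma_2$, start $S\in N_0$, productions of the forms $n\to\alpha$, $n\to b(\alpha)$ ($n\in N_0$, $b\in N_1$, $\alpha\in\Sigma_0$), $n\to b_1(b_2(\Box))$ ($b_i\in N_1$), $n\to\sigma(\Box,a)$, $n\to\sigma(a,\Box)$ ($\sigma\in\Sigma_2$, $a\in N_0\setminus\{S\}$), with a spine direction $d:\Sigma_2\to\{1,2\}$ such that in each production $n\to\sigma(\cdot,\cdot)$ containing $\Box$ the hole is in child $d(\sigma)$, and such that for each $n\in N_0$ no tree derivable from $n$ by one step followed by steps with only unary-nonterminal productions contains $n$. A step replaces a nullary nonterminal by a right-hand side, or a subtree $n(t')$ with $n\in N_1$ by the right-hand side with $\Box$ replaced by $t'$; $T(\mathcal G)$ is the set of terminal trees derivable from $S$. $\mathcal S(\mathcal G)$ is the language of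 the CFG with start $\top$, nonterminals $\{\top\}\cup N^2$ (write $n_g=(n,g)$), terminals $\alpha_n=(\alpha,n)$ and $\frac{\sigma}{n_1\ n_2}=(\sigma,n_1,n_2)$, and productions $\top\to\alpha_n$ for $(n\to\alpha)\in P$, $\top\to\alpha_nb_n$ for $(n\to b(\alpha))\in P$, and for all $g\in N$: $n_g\to b'_gb_g$ for $(n\to b(b'(\Box)))\in P$, $n_g\to\frac{\sigma}{g\ n'}$ for $(n\to\sigma(\Box,n'))\in P$, $n_g\to\frac{\sigma}{n'\ g}$ for $(n\to\sigma(n',\Box))\in P$. For an alphabet $\Theta$ and $\triangleleft\notin\Theta$, $\mathrm{Next}(L)=\bigcup_n\{\langle\theta_2,\theta_1\rangle\cdots\langle\theta_n,\theta_{n-1}\rangle\langle\triangleleft,\theta_n\rangle\mid\theta_1\cdots\theta_n\in L\}$. A letter $(s',\alpha_n)$ of $\mathrm{Next}(\mathcal S(\mathcal G))$ is regarded as the leaf symbol $((s',\alpha),n)$ and a letter $(s',\frac{\sigma}{n_1\ n_2})$ as the binary symbol $((s',\sigma),n_1,n_2)$ with direction $d((s',\sigma))=d(\sigma)$. For such annotated symbols define $\mathrm{gen}$ of a leaf symbol with annotation $n$ as $n$ and of a binary symbol annotated $(n_1,n_2)$ with underlying $\sigma$ as $n_{d(\sigma)}$; for a tree set $T$, $T_n$ is the set of trees whose root symbol has $\mathrm{gen}=n$; $\mathrm{attach}_T$ of a one-letter word is the leaf itself, and $\mathrm{attach}_T(w\,x)$ for a binary symbol $x$ annotated $(n_1,n_2)$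 with direction $k$ is the set of trees $x(t_1,t_2)$ with $t_k\in\mathrm{attach}_T(w)$ and $t_{3-k}\in T_{n_{3-k}}$; $\mathcal F(L)$ is the smallest $\mathcal F$ with $\mathrm{attach}_{\mathcal F}(w)\subseteq\mathcal F$ for all $w\in L$, and $\mathcal F(L)_S$ its trees whose root has $\mathrm{gen}=S$. MPDA $\mathcal A=(Q,\Delta,\Gamma,\delta,\tau,I,F)$: states $Q$, input symbols $\Delta$, stack symbols $\Gamma$, transitions $\delta\subseteq(Q\times\Gamma^{\le1}\times\Gamma^{\le1}\times Q)\setminus(Q\times\Gamma\times\Gamma\times Q)$, output $\tau:Q\to\Delta$, $I,F\subseteq Q$; moves $\langle q,\gamma\alpha\rangle\vdash\langle q',\gamma'\alpha\rangle$ for $(q,\gamma,\gamma',q')\in\delta$ if $\gamma\alpha\neq\varepsilon$; accepting runs start in $\langle q,\gamma\rangle$ with $q\in I$, $\gamma\in\Gamma$, and end in $\langle q,\varepsilon\rangle$ with $q\in F$; $L(\mathcal A)$ is the set of output strings $\tau(q_0)\cdots\tau(q_n)$ of accepting runs. Pop-normalized: some $\mathrm{return}:\Gamma\to Q$ satisfies $q'=\mathrm{return}(\gamma)$ for all $(q,\gamma,\varepsilon,q')\in\delta$, $\gamma\in\Gamma$. *)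

theory Defs
  imports Main
begin

datatype ('l, 'b) btree = Leaf 'l | Node 'b "('l, 'b) btree" "('l, 'b) btree"

text \<open>Sentential forms / right-hand sides of a spine grammar: the hole, nullary nonterminals,
  unary nonterminals, nullary terminals, binary terminals.\<close>
datatype ('n, 'a, 's) sf =
    SHole
  | SNt0 'n
  | SNt1 'n "('n, 'a, 's) sf"
  | SLeaf 'a
  | SBin 's "('n, 'a, 's) sf" "('n, 'a, 's) sf"

fun of_tree :: "('a, 's) btree \<Rightarrow> ('n, 'a, 's) sf" where
  "of_tree (Leaf a) = SLeaf a"
| "of_tree (Node s l r) = SBin s (of_tree l) (of_tree r)"

fun subst_hole :: "('n, 'a, 's) sf \<Rightarrow> ('n, 'a, 's) sf \<Rightarrow> ('n, 'a, 's) sf" where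
  "subst_hole SHole t = t"
| "subst_hole (SNt0 n) t = SNt0 n"
| "subst_hole (SNt1 b u) t = SNt1 b (subst_hole u t)"
| "subst_hole (SLeaf a) t = SLeaf a"
| "subst_hole (SBin s l r) t = SBin s (subst_hole l t) (subst_hole r t)"

fun sf_nts :: "('n, 'a, 's) sf \<Rightarrow> 'n set" where
  "sf_nts SHole = {}"
| "sf_nts (SNt0 n) = {n}"
| "sf_nts (SNt1 b u) = insert b (sf_nts u)"
| "sf_nts (SLeaf a) = {}"
| "sf_nts (SBin s l r) = sf_nts l \<union> sf_nts r"

record ('n, 'a, 's) spine_grammar =
  nts0 :: "'n set"
  nts1 :: "'n set"
  term0 :: "'a set"
  term2 :: "'s set"
  start :: 'n
  prods :: "('n \<times> ('n, 'a, 's) sf) set"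

inductive gstep :: "'n set \<Rightarrow> 'n set \<Rightarrow> ('n \<times> ('n, 'a, 's) sf) set
    \<Rightarrow> ('n, 'a, 's) sf \<Rightarrow> ('n, 'a, 's) sf \<Rightarrow> bool"
  for N0 N1 P where
  nullary: "(n, r) \<in> P \<Longrightarrow> n \<in> N0 \<Longrightarrow> gstep N0 N1 P (SNt0 n) r"
| unary: "(n, r) \<in> P \<Longrightarrow> n \<in> N1 \<Longrightarrow> gstep N0 N1 P (SNt1 n t) (subst_hole r t)"
| cong1: "gstep N0 N1 P t t' \<Longrightarrow> gstep N0 N1 P (SNt1 b t) (SNt1 b t')"
| congl: "gstep N0 N1 P l l' \<Longrightarrow> gstep N0 N1 P (SBin s l r) (SBin s l' r)"
| congr: "gstep N0 N1 P r r' \<Longrightarrow> gstep N0 N1 P (SBin s l r) (SBin s l r')"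

definition grammar_step :: "('n, 'a, 's) spine_grammar \<Rightarrow> ('n, 'a, 's) sf \<Rightarrow> ('n, 'a, 's) sf \<Rightarrow> bool" where
  "grammar_step G = gstep (nts0 G) (nts1 G) (prods G)"

definition unary_step :: "('n, 'a, 's) spine_grammar \<Rightarrow> ('n, 'a, 's) sf \<Rightarrow> ('n, 'a, 's) sf \<Rightarrow> bool" where
  "unary_step G = gstep (nts0 G) (nts1 G) {(n, r) \<in> prods G. n \<in> nts1 G}"

definition tree_lang :: "('n, 'a, 's) spine_grammar \<Rightarrow> ('a, 's) btree set" where
  "tree_lang G = {t. (grammar_step G)\<^sup>*\<^sup>* (SNt0 (start G)) (of_tree t)}"

definition normalized_spine :: "('n, 'a, 's) spine_grammar \<Rightarrow> ('s \<Rightarrow> nat) \<Rightarrow> bool" where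
  "normalized_spine G d \<longleftrightarrow>
     finite (nts0 G) \<and> finite (nts1 G) \<and> nts0 G \<inter> nts1 G = {} \<and>
     finite (term0 G) \<and> finite (term2 G) \<and> finite (prods G) \<and>
     start G \<in> nts0 G \<and>
     (\<forall>s \<in> term2 G. d s \<in> {1, 2}) \<and>
     (\<forall>(n, r) \<in> prods G.
        (n \<in> nts0 G \<and> (\<exists>a \<in> term0 G. r = SLeaf a))
      \<or> (n \<in> nts0 G \<and> (\<exists>b \<in> nts1 G. \<exists>a \<in> term0 G. r = SNt1 b (SLeaf a)))
      \<or> (n \<in> nts1 G \<and> (\<exists>b1 \<in> nts1 G. \<exists>b2 \<in> nts1 G. r = SNt1 b1 (SNt1 b2 SHole)))
      \<or> (n \<in> nts1 G \<and> (\<exists>s \<in> term2 G. \<exists>a \<in> nts0 G - {start G}.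
            r = SBin s SHole (SNt0 a) \<and> d s = 1))
      \<or> (n \<in> nts1 G \<and> (\<exists>s \<in> term2 G. \<exists>a \<in> nts0 G - {start G}.
            r = SBin s (SNt0 a) SHole \<and> d s = 2))) \<and>
     (\<forall>n \<in> nts0 G. \<forall>t t'. grammar_step G (SNt0 n) t \<longrightarrow> (unary_step G)\<^sup>*\<^sup>* t t'
        \<longrightarrow> n \<notin> sf_nts t')"

text \<open>A CFG is given by its productions (nonterminal, right-hand side over nonterminals (Inl)
  and terminals (Inr)); its language is the set of terminal words derivable from the start.\<close>
definition cfg_step :: "('N \<times> ('N + 'T) list) set \<Rightarrow> ('N + 'T) list \<Rightarrow> ('N + 'T) list \<Rightarrow> bool" where
  "cfg_step Pr u v \<longleftrightarrow> (\<exists>x y A rhs. (A, rhs) \<in> Pr \<and> u = x @ [Inl A] @ y \<and> v = x @ rhs @ y)"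

definition cfg_lang :: "('N \<times> ('N + 'T) list) set \<Rightarrow> 'N \<Rightarrow> 'T list set" where
  "cfg_lang Pr S = {w. (cfg_step Pr)\<^sup>*\<^sup>* [Inl S] (map Inr w)}"

text \<open>Terminals of S(G): alpha_n = SymA alpha n, and (sigma over n1 n2) = SymB sigma n1 n2.\<close>
datatype ('n, 'a, 's) sym = SymA 'a 'n | SymB 's 'n 'n

text \<open>Nonterminals of S(G): None is the start symbol top, Some (n, g) is n_g.\<close>
definition spine_prods :: "('n, 'a, 's) spine_grammar
    \<Rightarrow> (('n \<times> 'n) option \<times> (('n \<times> 'n) option + ('n, 'a, 's) sym) list) set" where
  "spine_prods G =
     {(None, [Inr (SymA a n)]) | n a. (n, SLeaf a) \<in> prods G}
   \<union> {(None, [Inr (SymA a n), Inl (Some (b, n))]) | n b a. (n, SNt1 b (SLeaf a)) \<in> prods G}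
   \<union> {(Some (n, g), [Inl (Some (b', g)), Inl (Some (b, g))]) | n b b' g.
        (n, SNt1 b (SNt1 b' SHole)) \<in> prods G \<and> g \<in> nts0 G \<union> nts1 G}
   \<union> {(Some (n, g), [Inr (SymB s g n')]) | n s n' g.
        (n, SBin s SHole (SNt0 n')) \<in> prods G \<and> g \<in> nts0 G \<union> nts1 G}
   \<union> {(Some (n, g), [Inr (SymB s n' g)]) | n s n' g.
        (n, SBin s (SNt0 n') SHole) \<in> prods G \<and> g \<in> nts0 G \<union> nts1 G}"

definition spine_lang :: "('n, 'a, 's) spine_grammar \<Rightarrow> ('n, 'a, 's) sym list set" where
  "spine_lang G = cfg_lang (spine_prods G) None"

text \<open>The letter <theta', theta> is the pair (Some theta', theta); the end marker is None.\<close>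
definition next_word :: "'t list \<Rightarrow> ('t option \<times> 't) list" where
  "next_word w = zip (map Some (tl w) @ [None]) w"

definition Next :: "'t list set \<Rightarrow> ('t option \<times> 't) list set" where
  "Next L = next_word ` L"

type_synonym ('n, 'a, 's) letter = "('n, 'a, 's) sym option \<times> ('n, 'a, 's) sym"
type_synonym ('n, 'a, 's) leafsym = "(('n, 'a, 's) sym option \<times> 'a) \<times> 'n"
type_synonym ('n, 'a, 's) binsym = "(('n, 'a, 's) sym option \<times> 's) \<times> 'n \<times> 'n"
type_synonym ('n, 'a, 's) ftree = "(('n, 'a, 's) leafsym, ('n, 'a, 's) binsym) btree"

fun tgen :: "('s \<Rightarrow> nat) \<Rightarrow> ('n, 'a, 's) ftree \<Rightarrow> 'n" where
  "tgen d (Leaf ((s', a), n)) = n"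
| "tgen d (Node ((s', s), n1, n2) l r) = (if d s = 1 then n1 else n2)"

fun attach_rev :: "('s \<Rightarrow> nat) \<Rightarrow> ('n, 'a, 's) ftree set \<Rightarrow> ('n, 'a, 's) letter list
    \<Rightarrow> ('n, 'a, 's) ftree set" where
  "attach_rev d T [] = {}"
| "attach_rev d T [(s', SymA a n)] = {Leaf ((s', a), n)}"
| "attach_rev d T [(s', SymB s n1 n2)] = {}"
| "attach_rev d T ((s', SymA a n) # y # ys) = {}"
| "attach_rev d T ((s', SymB s n1 n2) # y # ys) =
     {Node ((s', s), n1, n2) t1 t2 | t1 t2.
        if d s = 1 then t1 \<in> attach_rev d T (y # ys) \<and> t2 \<in> T \<and> tgen d t2 = n2
        else t2 \<in> attach_rev d T (y # ys) \<and> t1 \<in> T \<and> tgen d t1 = n1}"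

definition attach :: "('s \<Rightarrow> nat) \<Rightarrow> ('n, 'a, 's) ftree set \<Rightarrow> ('n, 'a, 's) letter list
    \<Rightarrow> ('n, 'a, 's) ftree set" where
  "attach d T w = attach_rev d T (rev w)"

definition Fcal :: "('s \<Rightarrow> nat) \<Rightarrow> ('n, 'a, 's) letter list set \<Rightarrow> ('n, 'a, 's) ftree set" where
  "Fcal d L = \<Inter> {F. \<forall>w \<in> L. attach d F w \<subseteq> F}"

definition Fcal_S :: "('s \<Rightarrow> nat) \<Rightarrow> 'n \<Rightarrow> ('n, 'a, 's) letter list set \<Rightarrow> ('n, 'a, 's) ftree set" where
  "Fcal_S d S L = {t \<in> Fcal d L. tgen d t = S}"

record ('q, 'd, 'g) mpda =
  states :: "'q set"
  inp :: "'d set"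
  stk :: "'g set"
  trans :: "('q \<times> 'g option \<times> 'g option \<times> 'q) set"
  out :: "'q \<Rightarrow> 'd"
  init :: "'q set"
  fin :: "'q set"

definition opt_list :: "'g option \<Rightarrow> 'g list" where
  "opt_list x = (case x of None \<Rightarrow> [] | Some g \<Rightarrow> [g])"

definition is_mpda :: "('q, 'd, 'g) mpda \<Rightarrow> bool" where
  "is_mpda A \<longleftrightarrow> finite (states A) \<and> finite (inp A) \<and> finite (stk A) \<and>
     trans A \<subseteq> states A \<times> (insert None (Some ` stk A)) \<times> (insert None (Some ` stk A)) \<times> states A \<and>
     (\<forall>q g g' q'. (q, Some g, Some g', q') \<notin> trans A) \<and>
     out A ` states A \<subseteq> inp A \<and> init A \<subseteq> states A \<and> fin A \<subseteq> states A"

definition mmove :: "('q, 'd, 'g) mpda \<Rightarrow> 'q \<times> 'g list \<Rightarrow> 'q \<times> 'g list \<Rightarrow> bool" where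
  "mmove A c c' \<longleftrightarrow> (\<exists>q g g' q' \<alpha>. (q, g, g', q') \<in> trans A \<and> opt_list g @ \<alpha> \<noteq> [] \<and>
      c = (q, opt_list g @ \<alpha>) \<and> c' = (q', opt_list g' @ \<alpha>))"

definition accepting_run :: "('q, 'd, 'g) mpda \<Rightarrow> ('q \<times> 'g list) list \<Rightarrow> bool" where
  "accepting_run A cs \<longleftrightarrow> cs \<noteq> [] \<and>
     fst (hd cs) \<in> init A \<and> (\<exists>\<gamma> \<in> stk A. snd (hd cs) = [\<gamma>]) \<and>
     fst (last cs) \<in> fin A \<and> snd (last cs) = [] \<and>
     (\<forall>i < length cs - 1. mmove A (cs ! i) (cs ! Suc i))"

definition mpda_lang :: "('q, 'd, 'g) mpda \<Rightarrow> 'd list set" where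
  "mpda_lang A = {map (out A \<circ> fst) cs | cs. accepting_run A cs}"

definition pop_normalized :: "('q, 'd, 'g) mpda \<Rightarrow> bool" where
  "pop_normalized A \<longleftrightarrow> (\<exists>ret. ret ` stk A \<subseteq> states A \<and>
     (\<forall>q \<gamma> q'. (q, Some \<gamma>, None, q') \<in> trans A \<longrightarrow> q' = ret \<gamma>))"

end

theory Submission
  imports Defs "HOL-Library.Countable_Set"
begin

text \<open>Apart from the one-letter words \<open>\<alpha>\<^sub>n\<close> of productions \<open>n \<rightarrow> \<alpha>\<close>, a word of \<open>\<S>(G)\<close> is
  \<open>\<alpha>\<^sub>n u\<close> for a production \<open>n \<rightarrow> b(\<alpha>)\<close> and a word \<open>u\<close> of \<open>b\<^sub>n\<close>. The words of \<open>X\<^sub>g\<close> are the yields of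
  binary derivation trees built from \<open>X\<^sub>g \<rightarrow> Y\<^sub>g R\<^sub>g\<close> and \<open>X\<^sub>g \<rightarrow> \<sigma>\<close>. A multi-pushdown automaton
  outputs \<open>Next(\<alpha>\<^sub>n u)\<close> by walking such a tree from left to right: its state holds the current letter
  and the context, from some \<open>X\<^sub>g\<close> down to \<open>Y\<^sub>g\<close>, still to be output before the letter on top of
  the stack; descending into a right subtree pushes the rest of the current context. Renaming states
  and stack symbols to natural numbers yields the automaton of the theorem.

  Attaching trees along a spine word \<open>\<alpha>\<^sub>n u\<close> replays, bottom up, the derivation
  \<open>n \<Rightarrow> b(\<alpha>) \<Rightarrow>\<^sup>* t\<close> along the spine of \<open>t\<close>, the subtrees hanging off the spine being taken from
  \<open>\<F>\<close> itself. Hence the trees of \<open>\<F>(Next(\<S>(G)))\<close> are, up to their annotations, exactly the trees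
  derivable from their generator, and those with generator \<open>S\<close> relabel to \<open>T(G)\<close>.\<close>

section \<open>Derivations of context-free grammars\<close>

inductive cfg_derives :: "('N \<times> ('N + 'T) list) set \<Rightarrow> ('N + 'T) list \<Rightarrow> 'T list \<Rightarrow> bool"
  for Pr where
  Nil: "cfg_derives Pr [] []"
| Inr: "cfg_derives Pr x w \<Longrightarrow> cfg_derives Pr (Inr t # x) (t # w)"
| Inl: "(A, rhs) \<in> Pr \<Longrightarrow> cfg_derives Pr rhs u \<Longrightarrow> cfg_derives Pr x w \<Longrightarrow>
    cfg_derives Pr (Inl A # x) (u @ w)"

lemma cfg_derives_append:
  "cfg_derives Pr x w1 \<Longrightarrow> cfg_derives Pr y w2 \<Longrightarrow> cfg_derives Pr (x @ y) (w1 @ w2)"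
  by (induction rule: cfg_derives.induct) (auto intro: cfg_derives.intros)

lemma cfg_derives_append_split:
  "cfg_derives Pr (x @ y) w \<Longrightarrow> \<exists>w1 w2. w = w1 @ w2 \<and> cfg_derives Pr x w1 \<and> cfg_derives Pr y w2"
proof (induction x arbitrary: w)
  case Nil
  then show ?case by (auto intro: cfg_derives.Nil)
next
  case (Cons s x)
  from Cons.prems show ?case
  proof cases
    case (Inr x' w' t)
    then obtain w1 w2 where "w' = w1 @ w2" "cfg_derives Pr x w1" "cfg_derives Pr y w2"
      using Cons.IH[of w'] by auto
    moreover from this have "cfg_derives Pr (s # x) (t # w1)"
      using Inr by (simp add: cfg_derives.Inr)
    ultimately show ?thesis using Inr by (metis append_Cons)
  next
    case (Inl A rhs u x' w')
    then obtain w1 w2 where "w' = w1 @ w2" "cfg_derives Pr x w1" "cfg_derives Pr y w2"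
      using Cons.IH[of w'] by auto
    moreover from this have "cfg_derives Pr (s # x) (u @ w1)"
      using Inl by (simp add: cfg_derives.Inl)
    ultimately show ?thesis using Inl by (metis append.assoc)
  qed simp
qed

lemma cfg_derives_map_Inr: "cfg_derives Pr (map Inr w) w"
  by (induction w) (auto intro: cfg_derives.intros)

lemma cfg_derives_Inl_single: "(A, rhs) \<in> Pr \<Longrightarrow> cfg_derives Pr rhs u \<Longrightarrow> cfg_derives Pr [Inl A] u"
  using cfg_derives.Inl[of A rhs Pr u "[]" "[]"] cfg_derives.Nil[of Pr] by simp

lemma cfg_derives_Inr_single: "cfg_derives Pr [Inr t] [t]"
  using cfg_derives_map_Inr[of Pr "[t]"] by simp

lemma cfg_derives_if_step:
  assumes "cfg_step Pr u v" "cfg_derives Pr v w"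
  shows "cfg_derives Pr u w"
proof -
  obtain x y A rhs where step: "(A, rhs) \<in> Pr" "u = x @ [Inl A] @ y" "v = x @ rhs @ y"
    using assms(1) unfolding cfg_step_def by blast
  obtain w1 w' where w: "w = w1 @ w'" "cfg_derives Pr x w1" "cfg_derives Pr (rhs @ y) w'"
    using cfg_derives_append_split[of Pr x "rhs @ y" w] assms(2) unfolding step(3) by blast
  obtain w2 w3 where w': "w' = w2 @ w3" "cfg_derives Pr rhs w2" "cfg_derives Pr y w3"
    using cfg_derives_append_split[OF w(3)] by blast
  have "cfg_derives Pr ([Inl A] @ y) (w2 @ w3)"
    using cfg_derives_append[OF cfg_derives_Inl_single[OF step(1) w'(2)] w'(3)] .
  then show ?thesis
    using cfg_derives_append[OF w(2)] step(2) w w' by simp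
qed

lemma cfg_steps_append:
  "(cfg_step Pr)\<^sup>*\<^sup>* u v \<Longrightarrow> (cfg_step Pr)\<^sup>*\<^sup>* (p @ u @ q) (p @ v @ q)"
proof (induction rule: rtranclp_induct)
  case (step v v')
  then obtain x y A rhs where "(A, rhs) \<in> Pr" "v = x @ [Inl A] @ y" "v' = x @ rhs @ y"
    unfolding cfg_step_def by blast
  then have "cfg_step Pr (p @ v @ q) (p @ v' @ q)"
    unfolding cfg_step_def by (intro exI[of _ "p @ x"] exI[of _ "y @ q"]) auto
  with step.IH show ?case by simp
qed simp

lemma cfg_steps_if_derives: "cfg_derives Pr x w \<Longrightarrow> (cfg_step Pr)\<^sup>*\<^sup>* x (map Inr w)"
proof (induction rule: cfg_derives.induct)
  case (Inr x w t)
  then show ?case using cfg_steps_append[of Pr x "map Inr w" "[Inr t]" "[]"] by simp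
next
  case (Inl A rhs u x w)
  have "cfg_step Pr (Inl A # x) (rhs @ x)"
    unfolding cfg_step_def using Inl(1) by (intro exI[of _ "[]"] exI[of _ x]) auto
  moreover have "(cfg_step Pr)\<^sup>*\<^sup>* (rhs @ x) (map Inr u @ x)"
    using cfg_steps_append[OF Inl.IH(1), of "[]" x] by simp
  moreover have "(cfg_step Pr)\<^sup>*\<^sup>* (map Inr u @ x) (map Inr u @ map Inr w)"
    using cfg_steps_append[OF Inl.IH(2), of "map Inr u" "[]"] by simp
  ultimately show ?case by (simp add: converse_rtranclp_into_rtranclp[OF _ rtranclp_trans])
qed simp

lemma cfg_lang_eq_derives: "cfg_lang Pr S = {w. cfg_derives Pr [Inl S] w}"
proof -
  have "cfg_derives Pr x w" if "(cfg_step Pr)\<^sup>*\<^sup>* x (map Inr w)" for x w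
    using that
  proof (induction rule: converse_rtranclp_induct)
    case base
    then show ?case by (rule cfg_derives_map_Inr)
  next
    case (step x x')
    then show ?case using cfg_derives_if_step by blast
  qed
  then show ?thesis
    unfolding cfg_lang_def using cfg_steps_if_derives by blast
qed

section \<open>The spine language\<close>

text \<open>\<open>spine_leaf G X g \<theta>\<close> and \<open>spine_branch G X Y R\<close> are the productions
  \<open>X\<^sub>g \<rightarrow> \<theta>\<close> and \<open>X\<^sub>g \<rightarrow> Y\<^sub>g R\<^sub>g\<close> of \<open>\<S>(G)\<close>, without the side condition on \<open>g\<close>.\<close>

definition spine_leaf :: "('n, 'a, 's) spine_grammar \<Rightarrow> 'n \<Rightarrow> 'n \<Rightarrow> ('n, 'a, 's) sym \<Rightarrow> bool" where
  "spine_leaf G X g \<theta> \<longleftrightarrow>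
     (\<exists>s n'. (X, SBin s SHole (SNt0 n')) \<in> prods G \<and> \<theta> = SymB s g n') \<or>
     (\<exists>s n'. (X, SBin s (SNt0 n') SHole) \<in> prods G \<and> \<theta> = SymB s n' g)"

definition spine_branch :: "('n, 'a, 's) spine_grammar \<Rightarrow> 'n \<Rightarrow> 'n \<Rightarrow> 'n \<Rightarrow> bool" where
  "spine_branch G X Y R \<longleftrightarrow> (X, SNt1 R (SNt1 Y SHole)) \<in> prods G"

inductive spine_derives :: "('n, 'a, 's) spine_grammar \<Rightarrow> 'n \<Rightarrow> 'n \<Rightarrow> ('n, 'a, 's) sym list \<Rightarrow> bool"
  for G where
  leaf: "spine_leaf G X g \<theta> \<Longrightarrow> spine_derives G X g [\<theta>]"
| branch: "spine_branch G X Y R \<Longrightarrow> spine_derives G Y g u \<Longrightarrow> spine_derives G R g v \<Longrightarrow>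
    spine_derives G X g (u @ v)"

lemma spine_derives_not_Nil: "spine_derives G X g w \<Longrightarrow> w \<noteq> []"
  by (induction rule: spine_derives.induct) auto

definition spine_words_leaf :: "('n, 'a, 's) spine_grammar \<Rightarrow> ('n, 'a, 's) sym list set" where
  "spine_words_leaf G = {[SymA a n] | a n. (n, SLeaf a) \<in> prods G}"

definition spine_words_unary :: "('n, 'a, 's) spine_grammar \<Rightarrow> ('n, 'a, 's) sym list set" where
  "spine_words_unary G =
     {SymA a n # u | a n b u. (n, SNt1 b (SLeaf a)) \<in> prods G \<and> spine_derives G b n u}"

lemma spine_prods_cases:
  assumes "(A, rhs) \<in> spine_prods G"
  obtains (leaf_word) n a where "A = None" "rhs = [Inr (SymA a n)]" "(n, SLeaf a) \<in> prods G"
  | (unary_word) n b a where "A = None" "rhs = [Inr (SymA a n), Inl (Some (b, n))]"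
      "(n, SNt1 b (SLeaf a)) \<in> prods G"
  | (branch) X g Y R where "A = Some (X, g)" "rhs = [Inl (Some (Y, g)), Inl (Some (R, g))]"
      "spine_branch G X Y R"
  | (leaf) X g \<theta> where "A = Some (X, g)" "rhs = [Inr \<theta>]" "spine_leaf G X g \<theta>"
  using assms unfolding spine_prods_def spine_branch_def spine_leaf_def by blast

text \<open>The induction passes through every suffix of a right-hand side of \<open>\<S>(G)\<close>, so the statement
  covers each of these shapes.\<close>

lemma spine_derives_if_cfg_derives:
  "cfg_derives (spine_prods G) x w \<Longrightarrow>
    (\<forall>X g. x = [Inl (Some (X, g))] \<longrightarrow> spine_derives G X g w) \<and>
    (\<forall>Y R g. x = [Inl (Some (Y, g)), Inl (Some (R, g))] \<longrightarrow>
       (\<exists>u v. w = u @ v \<and> spine_derives G Y g u \<and> spine_derives G R g v)) \<and>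
    (\<forall>t X g. x = [Inr t, Inl (Some (X, g))] \<longrightarrow> (\<exists>u. w = t # u \<and> spine_derives G X g u)) \<and>
    (\<forall>t. x = [Inr t] \<longrightarrow> w = [t]) \<and> (x = [] \<longrightarrow> w = []) \<and>
    (x = [Inl None] \<longrightarrow> w \<in> spine_words_leaf G \<union> spine_words_unary G)"
proof (induction rule: cfg_derives.induct)
  case (Inl A rhs u x w)
  have "(\<forall>X g. A = Some (X, g) \<longrightarrow> spine_derives G X g u) \<and>
    (A = None \<longrightarrow> u \<in> spine_words_leaf G \<union> spine_words_unary G)"
    using Inl.hyps(1)
  proof (cases rule: spine_prods_cases)
    case leaf_word
    then show ?thesis using Inl.IH(1) unfolding spine_words_leaf_def by auto
  next
    case unary_word
    then show ?thesis using Inl.IH(1) unfolding spine_words_unary_def by blast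
  next
    case branch
    then show ?thesis using Inl.IH(1) by (auto intro: spine_derives.branch)
  next
    case leaf
    then show ?thesis using Inl.IH(1) by (auto intro: spine_derives.leaf)
  qed
  with Inl.IH(2) show ?case by (intro conjI allI impI) force+
qed auto

lemma cfg_derives_if_spine_derives:
  "spine_derives G X g w \<Longrightarrow> g \<in> nts0 G \<union> nts1 G \<Longrightarrow>
    cfg_derives (spine_prods G) [Inl (Some (X, g))] w"
proof (induction rule: spine_derives.induct)
  case (leaf X g \<theta>)
  then have "(Some (X, g), [Inr \<theta>]) \<in> spine_prods G"
    unfolding spine_prods_def spine_leaf_def by blast
  then show ?case by (rule cfg_derives_Inl_single[OF _ cfg_derives_Inr_single])
next
  case (branch X Y R g u v)
  then have "(Some (X, g), [Inl (Some (Y, g)), Inl (Some (R, g))]) \<in> spine_prods G"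
    unfolding spine_prods_def spine_branch_def by blast
  moreover have "cfg_derives (spine_prods G) [Inl (Some (Y, g)), Inl (Some (R, g))] (u @ v)"
    using cfg_derives_append[OF branch.IH] branch.prems by simp
  ultimately show ?case by (rule cfg_derives_Inl_single)
qed

text \<open>\<open>spine_context G X Y g v\<close>: the sentential form \<open>X\<^sub>g\<close> rewrites leftmost to \<open>Y\<^sub>g v\<close>.\<close>

inductive spine_context ::
  "('n, 'a, 's) spine_grammar \<Rightarrow> 'n \<Rightarrow> 'n \<Rightarrow> 'n \<Rightarrow> ('n, 'a, 's) sym list \<Rightarrow> bool"
  for G where
  refl: "spine_context G X X g []"
| step: "spine_context G X Z g v \<Longrightarrow> spine_branch G Z Y R \<Longrightarrow> spine_derives G R g u \<Longrightarrow>
    spine_context G X Y g (u @ v)"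

lemma spine_context_Nil: "spine_context G X Y g [] \<Longrightarrow> X = Y"
  by (erule spine_context.cases) (auto dest: spine_derives_not_Nil)

lemma spine_context_trans:
  "spine_context G Y' Y g v1 \<Longrightarrow> spine_context G X Y' g v2 \<Longrightarrow> spine_context G X Y g (v1 @ v2)"
proof (induction rule: spine_context.induct)
  case (step Y' Z g v Y R u)
  have "spine_context G X Y g (u @ v @ v2)"
    using spine_context.step[OF step.IH[OF step.prems] step.hyps(2,3)] .
  then show ?case by simp
qed simp

lemma spine_derives_leaf_context:
  "spine_derives G X g w \<Longrightarrow> \<exists>Y \<theta> v. spine_leaf G Y g \<theta> \<and> spine_context G X Y g v \<and> w = \<theta> # v"
proof (induction rule: spine_derives.induct)
  case (leaf X g \<theta>)
  then show ?case using spine_context.refl by fast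
next
  case (branch X Y' R g u v')
  then obtain Y \<theta> v where leaf: "spine_leaf G Y g \<theta>" and ctx: "spine_context G Y' Y g v"
    and u: "u = \<theta> # v"
    by blast
  have "spine_context G X Y' g (v' @ [])"
    using spine_context.step[OF spine_context.refl branch.hyps(1,3)] .
  then have "spine_context G X Y g (v @ v')"
    using spine_context_trans[OF ctx] by simp
  with leaf u show ?case by auto
qed

lemma spine_derives_context:
  "spine_context G X Y g v \<Longrightarrow> spine_derives G Y g w \<Longrightarrow> spine_derives G X g (w @ v)"
proof (induction arbitrary: w rule: spine_context.induct)
  case (step X Z g v Y R u)
  have "spine_derives G Z g (w @ u)"
    using spine_derives.branch[OF step.hyps(2) step.prems step.hyps(3)] .
  from step.IH[OF this] show ?case by simp
qed simp

lemma spine_context_first_leaf: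
  assumes "spine_context G X Y g v" "v \<noteq> []"
  shows "\<exists>Z R R' \<theta> u v'. spine_context G X Z g v' \<and> spine_branch G Z Y R \<and> spine_leaf G R' g \<theta> \<and>
    spine_context G R R' g u \<and> v = \<theta> # u @ v'"
proof -
  obtain Z R u v' where "spine_context G X Z g v'" "spine_branch G Z Y R" "spine_derives G R g u"
    "v = u @ v'"
    using assms by (cases rule: spine_context.cases) auto
  with spine_derives_leaf_context show ?thesis by fastforce
qed

section \<open>Normalized spine grammars\<close>

locale normalized_spine_grammar =
  fixes G :: "('n, 'a, 's) spine_grammar" and d :: "'s \<Rightarrow> nat"
  assumes normalized: "normalized_spine G d"
begin

lemma prods_cases:
  assumes "(n, r) \<in> prods G"
  obtains (leaf) a where "n \<in> nts0 G" "a \<in> term0 G" "r = SLeaf a"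
  | (unary) b a where "n \<in> nts0 G" "b \<in> nts1 G" "a \<in> term0 G" "r = SNt1 b (SLeaf a)"
  | (branch) b1 b2 where "n \<in> nts1 G" "b1 \<in> nts1 G" "b2 \<in> nts1 G" "r = SNt1 b1 (SNt1 b2 SHole)"
  | (left) s a where "n \<in> nts1 G" "s \<in> term2 G" "a \<in> nts0 G" "r = SBin s SHole (SNt0 a)" "d s = 1"
  | (right) s a where "n \<in> nts1 G" "s \<in> term2 G" "a \<in> nts0 G" "r = SBin s (SNt0 a) SHole" "d s = 2"
proof -
  have "\<forall>(n, r) \<in> prods G.
        (n \<in> nts0 G \<and> (\<exists>a \<in> term0 G. r = SLeaf a))
      \<or> (n \<in> nts0 G \<and> (\<exists>b \<in> nts1 G. \<exists>a \<in> term0 G. r = SNt1 b (SLeaf a)))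
      \<or> (n \<in> nts1 G \<and> (\<exists>b1 \<in> nts1 G. \<exists>b2 \<in> nts1 G. r = SNt1 b1 (SNt1 b2 SHole)))
      \<or> (n \<in> nts1 G \<and> (\<exists>s \<in> term2 G. \<exists>a \<in> nts0 G - {start G}. r = SBin s SHole (SNt0 a) \<and> d s = 1))
      \<or> (n \<in> nts1 G \<and> (\<exists>s \<in> term2 G. \<exists>a \<in> nts0 G - {start G}. r = SBin s (SNt0 a) SHole \<and> d s = 2))"
    using normalized unfolding normalized_spine_def by (elim conjE) assumption
  from this[rule_format, OF assms, unfolded prod.case] show ?thesis
  proof (elim disjE conjE bexE)
    fix a assume "n \<in> nts0 G" "a \<in> term0 G" "r = SLeaf a"
    then show ?thesis by (rule that(1))
  next
    fix b a assume "n \<in> nts0 G" "b \<in> nts1 G" "a \<in> term0 G" "r = SNt1 b (SLeaf a)"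
    then show ?thesis by (rule that(2))
  next
    fix b1 b2 assume "n \<in> nts1 G" "b1 \<in> nts1 G" "b2 \<in> nts1 G" "r = SNt1 b1 (SNt1 b2 SHole)"
    then show ?thesis by (rule that(3))
  next
    fix s a assume "n \<in> nts1 G" "s \<in> term2 G" "a \<in> nts0 G - {start G}"
      "r = SBin s SHole (SNt0 a)" "d s = 1"
    then show ?thesis by (intro that(4)) simp_all
  next
    fix s a assume "n \<in> nts1 G" "s \<in> term2 G" "a \<in> nts0 G - {start G}"
      "r = SBin s (SNt0 a) SHole" "d s = 2"
    then show ?thesis by (intro that(5)) simp_all
  qed
qed

lemma nts_disjoint: "nts0 G \<inter> nts1 G = {}"
  using normalized unfolding normalized_spine_def by (elim conjE) assumption

lemma leaf_prodD: "(n, SLeaf a) \<in> prods G \<Longrightarrow> n \<in> nts0 G"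
  by (erule prods_cases) auto

lemma unary_prodD: "(n, SNt1 b (SLeaf a)) \<in> prods G \<Longrightarrow> n \<in> nts0 G \<and> b \<in> nts1 G \<and> a \<in> term0 G"
  by (erule prods_cases) auto

lemma branch_prodD:
  "(n, SNt1 b1 (SNt1 b2 SHole)) \<in> prods G \<Longrightarrow> n \<in> nts1 G \<and> b1 \<in> nts1 G \<and> b2 \<in> nts1 G"
  by (erule prods_cases) auto

lemma left_prodD:
  "(n, SBin s SHole (SNt0 a)) \<in> prods G \<Longrightarrow> n \<in> nts1 G \<and> s \<in> term2 G \<and> a \<in> nts0 G \<and> d s = 1"
  by (erule prods_cases) auto

lemma right_prodD:
  "(n, SBin s (SNt0 a) SHole) \<in> prods G \<Longrightarrow> n \<in> nts1 G \<and> s \<in> term2 G \<and> a \<in> nts0 G \<and> d s = 2"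
  by (erule prods_cases) auto

lemma spine_lang_eq: "spine_lang G = spine_words_leaf G \<union> spine_words_unary G"
proof
  show "spine_lang G \<subseteq> spine_words_leaf G \<union> spine_words_unary G"
    unfolding spine_lang_def cfg_lang_eq_derives using spine_derives_if_cfg_derives by blast
next
  have "(None, [Inr (SymA a n)]) \<in> spine_prods G" if "(n, SLeaf a) \<in> prods G" for n a
    using that unfolding spine_prods_def by blast
  then have "spine_words_leaf G \<subseteq> spine_lang G"
    unfolding spine_words_leaf_def spine_lang_def cfg_lang_eq_derives
    using cfg_derives_Inl_single cfg_derives_Inr_single by fastforce
  moreover have "spine_words_unary G \<subseteq> spine_lang G"
  proof
    fix x assume "x \<in> spine_words_unary G"
    then obtain a n b u where x: "x = SymA a n # u" and prod: "(n, SNt1 b (SLeaf a)) \<in> prods G"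
      and u: "spine_derives G b n u"
      unfolding spine_words_unary_def by blast
    have "(None, [Inr (SymA a n), Inl (Some (b, n))]) \<in> spine_prods G"
      using prod unfolding spine_prods_def by blast
    moreover have "n \<in> nts0 G \<union> nts1 G" using unary_prodD[OF prod] by blast
    then have "cfg_derives (spine_prods G) [Inr (SymA a n), Inl (Some (b, n))] (SymA a n # u)"
      using cfg_derives_if_spine_derives[OF u] cfg_derives.Inr by fast
    ultimately show "x \<in> spine_lang G"
      unfolding spine_lang_def cfg_lang_eq_derives x using cfg_derives_Inl_single by fast
  qed
  ultimately show "spine_words_leaf G \<union> spine_words_unary G \<subseteq> spine_lang G" by blast
qed

end

section \<open>Next words\<close>

text \<open>\<open>next_word_to x e\<close> is the \<open>Next\<close>-encoding of \<open>x\<close> whose last letter points to \<open>e\<close>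
  instead of the end marker; it encodes an infix of a \<open>Next\<close>-encoded word.\<close>

definition next_word_to :: "'t list \<Rightarrow> 't option \<Rightarrow> ('t option \<times> 't) list" where
  "next_word_to x e = zip (map Some (tl x) @ [e]) x"

lemma next_word_eq: "next_word x = next_word_to x None"
  unfolding next_word_def next_word_to_def by simp

lemma next_word_to_Nil[simp]: "next_word_to [] e = []"
  unfolding next_word_to_def by simp

lemma next_word_to_Cons:
  "next_word_to (a # x) e = (if x = [] then e else Some (hd x), a) # next_word_to x e"
  unfolding next_word_to_def by (cases x) auto

lemma next_word_to_single[simp]: "next_word_to [a] e = [(e, a)]"
  by (simp add: next_word_to_Cons)

lemma length_next_word_to[simp]: "length (next_word_to x e) = length x"
  unfolding next_word_to_def by simp

lemma next_word_to_append:
  "y \<noteq> [] \<Longrightarrow> next_word_to (x @ y) e = next_word_to x (Some (hd y)) @ next_word_to y e"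
  by (induction x) (auto simp: next_word_to_Cons)

fun linked :: "('t option \<times> 't) list \<Rightarrow> 't option \<Rightarrow> bool" where
  "linked [] e = True"
| "linked [p] e = (fst p = e)"
| "linked (p # q # r) e = (fst p = Some (snd q) \<and> linked (q # r) e)"

lemma linked_Cons:
  "linked (p # w) e = (if w = [] then fst p = e else fst p = Some (snd (hd w)) \<and> linked w e)"
  by (cases w) auto

lemma linked_append:
  "w2 \<noteq> [] \<Longrightarrow> linked w1 (Some (snd (hd w2))) \<Longrightarrow> linked w2 e \<Longrightarrow> linked (w1 @ w2) e"
  by (induction w1) (auto simp: linked_Cons hd_append split: if_splits)

lemma next_word_to_map_snd: "linked w e \<Longrightarrow> next_word_to (map snd w) e = w"
  by (induction w e rule: linked.induct) (auto simp: next_word_to_Cons)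

section \<open>Runs of multi-pushdown automata\<close>

lemma opt_list_simps[simp]: "opt_list None = []" "opt_list (Some g) = [g]"
  unfolding opt_list_def by simp_all

inductive mpda_run :: "('q, 'd, 'g) mpda \<Rightarrow> 'q \<times> 'g list \<Rightarrow> 'd list \<Rightarrow> 'q \<times> 'g list \<Rightarrow> bool"
  for A where
  refl: "mpda_run A c [] c"
| step: "mmove A c c1 \<Longrightarrow> mpda_run A c1 w c' \<Longrightarrow> mpda_run A c (out A (fst c) # w) c'"

text \<open>\<open>pop_run A q \<gamma> w q'\<close>: started in \<open>q\<close> with \<open>\<gamma>\<close> on top of the stack, the automaton pops \<open>\<gamma>\<close>
  on entering \<open>q'\<close> without touching the stack below; \<open>w\<close> is the output before \<open>q'\<close> is reached.\<close>

inductive pop_run :: "('q, 'd, 'g) mpda \<Rightarrow> 'q \<Rightarrow> 'g \<Rightarrow> 'd list \<Rightarrow> 'q \<Rightarrow> bool"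
  for A where
  pop: "(q, Some \<gamma>, None, q') \<in> trans A \<Longrightarrow> pop_run A q \<gamma> [out A q] q'"
| skip: "(q, None, None, q1) \<in> trans A \<Longrightarrow> pop_run A q1 \<gamma> w q' \<Longrightarrow> pop_run A q \<gamma> (out A q # w) q'"
| push: "(q, None, Some \<gamma>', q1) \<in> trans A \<Longrightarrow> pop_run A q1 \<gamma>' w1 q2 \<Longrightarrow> pop_run A q2 \<gamma> w2 q' \<Longrightarrow>
    pop_run A q \<gamma> (out A q # w1 @ w2) q'"

lemma mpda_run_trans: "mpda_run A c w1 c1 \<Longrightarrow> mpda_run A c1 w2 c2 \<Longrightarrow> mpda_run A c (w1 @ w2) c2"
  by (induction rule: mpda_run.induct) (auto intro: mpda_run.step)

lemma mpda_run_if_chain: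
  "cs \<noteq> [] \<Longrightarrow> \<forall>i < length cs - 1. mmove A (cs ! i) (cs ! Suc i) \<Longrightarrow>
    mpda_run A (hd cs) (map (out A \<circ> fst) (butlast cs)) (last cs)"
proof (induction cs)
  case (Cons c cs)
  show ?case
  proof (cases "cs = []")
    case True
    then show ?thesis by (simp add: mpda_run.refl)
  next
    case False
    have "mmove A c (hd cs)" using Cons.prems(2) False by (cases cs) auto
    moreover have "\<forall>i < length cs - 1. mmove A (cs ! i) (cs ! Suc i)"
    proof (intro allI impI)
      fix i assume "i < length cs - 1"
      then show "mmove A (cs ! i) (cs ! Suc i)" using Cons.prems(2)[rule_format, of "Suc i"] by simp
    qed
    ultimately show ?thesis
      using mpda_run.step[of A c "hd cs"] Cons.IH False by (simp add: comp_def)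
  qed
qed simp

lemma chain_if_mpda_run:
  "mpda_run A c w c' \<Longrightarrow> \<exists>cs. cs \<noteq> [] \<and> hd cs = c \<and> last cs = c' \<and>
     (\<forall>i < length cs - 1. mmove A (cs ! i) (cs ! Suc i)) \<and> map (out A \<circ> fst) (butlast cs) = w"
proof (induction rule: mpda_run.induct)
  case (refl c)
  then show ?case by (intro exI[of _ "[c]"]) simp
next
  case (step c c1 w c')
  then obtain cs where cs: "cs \<noteq> []" "hd cs = c1" "last cs = c'"
    "\<forall>i < length cs - 1. mmove A (cs ! i) (cs ! Suc i)" "map (out A \<circ> fst) (butlast cs) = w"
    by blast
  have "\<forall>i < length (c # cs) - 1. mmove A ((c # cs) ! i) ((c # cs) ! Suc i)"
  proof (intro allI impI)
    fix i assume "i < length (c # cs) - 1"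
    then show "mmove A ((c # cs) ! i) ((c # cs) ! Suc i)"
      using cs step.hyps(1) by (cases i) (auto simp: hd_conv_nth)
  qed
  then show ?case using cs by (intro exI[of _ "c # cs"]) auto
qed

lemma map_butlast_last: "cs \<noteq> [] \<Longrightarrow> map h cs = map h (butlast cs) @ [h (last cs)]"
  by (cases cs rule: rev_cases) auto

lemma mpda_lang_eq_runs:
  "mpda_lang A = {w @ [out A qf] | q \<gamma> w qf.
     q \<in> init A \<and> \<gamma> \<in> stk A \<and> qf \<in> fin A \<and> mpda_run A (q, [\<gamma>]) w (qf, [])}"
proof (intro set_eqI iffI)
  fix x assume "x \<in> mpda_lang A"
  then obtain cs where x: "x = map (out A \<circ> fst) cs" and acc: "accepting_run A cs"
    unfolding mpda_lang_def by blast
  then obtain \<gamma> where cs: "cs \<noteq> []" "fst (hd cs) \<in> init A" "\<gamma> \<in> stk A" "snd (hd cs) = [\<gamma>]"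
    "fst (last cs) \<in> fin A" "snd (last cs) = []" "\<forall>i < length cs - 1. mmove A (cs ! i) (cs ! Suc i)"
    unfolding accepting_run_def by blast
  have "hd cs = (fst (hd cs), [\<gamma>])" "last cs = (fst (last cs), [])"
    using cs(4,6) by (simp_all add: prod_eq_iff)
  then have "mpda_run A (fst (hd cs), [\<gamma>]) (map (out A \<circ> fst) (butlast cs)) (fst (last cs), [])"
    using mpda_run_if_chain[OF cs(1,7)] by simp
  moreover have "x = map (out A \<circ> fst) (butlast cs) @ [out A (fst (last cs))]"
    using map_butlast_last[OF cs(1), of "out A \<circ> fst"] x by simp
  ultimately show "x \<in> {w @ [out A qf] | q \<gamma> w qf.
     q \<in> init A \<and> \<gamma> \<in> stk A \<and> qf \<in> fin A \<and> mpda_run A (q, [\<gamma>]) w (qf, [])}"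
    using cs(2,3,5) by blast
next
  fix x assume "x \<in> {w @ [out A qf] | q \<gamma> w qf.
     q \<in> init A \<and> \<gamma> \<in> stk A \<and> qf \<in> fin A \<and> mpda_run A (q, [\<gamma>]) w (qf, [])}"
  then obtain q \<gamma> w qf where x: "x = w @ [out A qf]" "q \<in> init A" "\<gamma> \<in> stk A" "qf \<in> fin A"
    and run: "mpda_run A (q, [\<gamma>]) w (qf, [])"
    by blast
  obtain cs where cs: "cs \<noteq> []" "hd cs = (q, [\<gamma>])" "last cs = (qf, [])"
    "\<forall>i < length cs - 1. mmove A (cs ! i) (cs ! Suc i)" "map (out A \<circ> fst) (butlast cs) = w"
    using chain_if_mpda_run[OF run] by blast
  have "accepting_run A cs" unfolding accepting_run_def using cs x by auto
  moreover have "x = map (out A \<circ> fst) cs"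
    using map_butlast_last[OF cs(1), of "out A \<circ> fst"] x(1) cs(3,5) by simp
  ultimately show "x \<in> mpda_lang A" unfolding mpda_lang_def by blast
qed

lemma mmoveI:
  "(q, g, g', q') \<in> trans A \<Longrightarrow> opt_list g @ \<alpha> \<noteq> [] \<Longrightarrow>
    mmove A (q, opt_list g @ \<alpha>) (q', opt_list g' @ \<alpha>)"
  unfolding mmove_def by blast

lemma mpda_run_if_pop_run: "pop_run A q \<gamma> w q' \<Longrightarrow> mpda_run A (q, \<gamma> # \<alpha>) w (q', \<alpha>)"
proof (induction arbitrary: \<alpha> rule: pop_run.induct)
  case (pop q \<gamma> q')
  have "mmove A (q, \<gamma> # \<alpha>) (q', \<alpha>)"
    using mmoveI[OF pop, of \<alpha>] by simp
  from mpda_run.step[OF this mpda_run.refl] show ?case by simp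
next
  case (skip q q1 \<gamma> w q')
  have "mmove A (q, \<gamma> # \<alpha>) (q1, \<gamma> # \<alpha>)"
    using mmoveI[OF skip.hyps(1), of "\<gamma> # \<alpha>"] by simp
  from mpda_run.step[OF this skip.IH] show ?case by simp
next
  case (push q \<gamma>' q1 w1 q2 \<gamma> w2 q')
  have "mmove A (q, \<gamma> # \<alpha>) (q1, \<gamma>' # \<gamma> # \<alpha>)"
    using mmoveI[OF push.hyps(1), of "\<gamma> # \<alpha>"] by simp
  moreover have "mpda_run A (q1, \<gamma>' # \<gamma> # \<alpha>) (w1 @ w2) (q', \<alpha>)"
    using mpda_run_trans[OF push.IH] .
  ultimately show ?case using mpda_run.step by (metis fst_conv)
qed

lemma mpda_run_from_Nil: "mpda_run A c w c' \<Longrightarrow> snd c = [] \<Longrightarrow> w = [] \<and> c' = c"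
  by (induction rule: mpda_run.induct) (auto simp: mmove_def)

lemma mmove_from_Cons:
  assumes no_swap: "\<forall>q g g' q'. (q, Some g, Some g', q') \<notin> trans A"
    and "mmove A (q, \<gamma> # \<alpha>) c1"
  obtains (pop) q1 where "(q, Some \<gamma>, None, q1) \<in> trans A" "c1 = (q1, \<alpha>)"
  | (skip) q1 where "(q, None, None, q1) \<in> trans A" "c1 = (q1, \<gamma> # \<alpha>)"
  | (push) q1 \<gamma>' where "(q, None, Some \<gamma>', q1) \<in> trans A" "c1 = (q1, \<gamma>' # \<gamma> # \<alpha>)"
proof -
  obtain g g' q1 \<alpha>0 where t: "(q, g, g', q1) \<in> trans A"
    and c: "\<gamma> # \<alpha> = opt_list g @ \<alpha>0" "c1 = (q1, opt_list g' @ \<alpha>0)"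
    using assms(2) unfolding mmove_def by auto
  show ?thesis
  proof (cases g)
    case None
    then show ?thesis using t c that(2,3) by (cases g') auto
  next
    case (Some x)
    then have "g' = None" using no_swap t by (cases g') auto
    then show ?thesis using t c Some that(1) by auto
  qed
qed

lemma pop_run_if_mpda_run:
  assumes no_swap: "\<forall>q g g' q'. (q, Some g, Some g', q') \<notin> trans A"
  shows "mpda_run A (q, \<gamma> # \<alpha>) w c' \<Longrightarrow> length (snd c') \<le> length \<alpha> \<Longrightarrow>
    \<exists>w1 w2 q''. w = w1 @ w2 \<and> pop_run A q \<gamma> w1 q'' \<and> mpda_run A (q'', \<alpha>) w2 c'"
proof (induction "length w" arbitrary: w q \<gamma> \<alpha> rule: less_induct)
  case less
  from less.prems(1) show ?case
  proof cases
    case refl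
    then show ?thesis using less.prems(2) by auto
  next
    case (step c1 w')
    have shorter: "length w' < length w" using step(1) by simp
    from no_swap step(2) show ?thesis
    proof (cases rule: mmove_from_Cons)
      case (pop q1)
      have "pop_run A q \<gamma> [out A q] q1" using pop(1) by (rule pop_run.pop)
      moreover have "w = [out A q] @ w'" using step(1) by simp
      ultimately show ?thesis using pop(2) step(3) by blast
    next
      case (skip q1)
      obtain w1 w2 q'' where "w' = w1 @ w2" "pop_run A q1 \<gamma> w1 q''" "mpda_run A (q'', \<alpha>) w2 c'"
        using less.hyps[OF shorter, of q1 \<gamma> \<alpha>] step(3) skip(2) less.prems(2) by auto
      moreover have "pop_run A q \<gamma> (out A q # w1) q''"
        using pop_run.skip[OF skip(1)] calculation(2) .
      moreover have "w = (out A q # w1) @ w2" using step(1) calculation(1) by simp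
      ultimately show ?thesis by blast
    next
      case (push q1 \<gamma>')
      obtain u1 u2 q2 where u: "w' = u1 @ u2" "pop_run A q1 \<gamma>' u1 q2" "mpda_run A (q2, \<gamma> # \<alpha>) u2 c'"
        using less.hyps[OF shorter, of q1 \<gamma>' "\<gamma> # \<alpha>"] step(3) push(2) less.prems(2) by auto
      have "length u2 < length w" using shorter u(1) by simp
      then obtain v1 v2 q'' where v: "u2 = v1 @ v2" "pop_run A q2 \<gamma> v1 q''"
        "mpda_run A (q'', \<alpha>) v2 c'"
        using less.hyps[of u2 q2 \<gamma> \<alpha>] u(3) less.prems(2) by auto
      have "pop_run A q \<gamma> (out A q # u1 @ v1) q''"
        using pop_run.push[OF push(1) u(2) v(2)] .
      moreover have "w = (out A q # u1 @ v1) @ v2" using step(1) u(1) v(1) by simp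
      ultimately show ?thesis using v(3) by blast
    qed
  qed
qed

lemma mpda_lang_eq_pop_runs:
  assumes no_swap: "\<forall>q g g' q'. (q, Some g, Some g', q') \<notin> trans A"
  shows "mpda_lang A = {w @ [out A qf] | q \<gamma> w qf.
    q \<in> init A \<and> \<gamma> \<in> stk A \<and> qf \<in> fin A \<and> pop_run A q \<gamma> w qf}"
proof -
  have "mpda_run A (q, [\<gamma>]) w (qf, []) \<longleftrightarrow> pop_run A q \<gamma> w qf" for q \<gamma> w qf
  proof
    assume run: "mpda_run A (q, [\<gamma>]) w (qf, [])"
    obtain w1 w2 q'' where "w = w1 @ w2" "pop_run A q \<gamma> w1 q''"
      and rest: "mpda_run A (q'', []) w2 (qf, [])"
      using pop_run_if_mpda_run[OF no_swap run] by auto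
    moreover have "w2 = [] \<and> qf = q''" using mpda_run_from_Nil[OF rest] by simp
    ultimately show "pop_run A q \<gamma> w qf" by simp
  qed (rule mpda_run_if_pop_run)
  then show ?thesis unfolding mpda_lang_eq_runs by simp
qed

section \<open>Renaming the states of an automaton\<close>

definition rename_mpda :: "('q \<Rightarrow> 'r) \<Rightarrow> ('q, 'd, 'q) mpda \<Rightarrow> ('r, 'd, 'r) mpda" where
  "rename_mpda f A = \<lparr>states = f ` states A, inp = inp A, stk = f ` stk A,
     trans = (\<lambda>(q, g, g', q'). (f q, map_option f g, map_option f g', f q')) ` trans A,
     out = out A \<circ> inv_into (states A) f, init = f ` init A, fin = f ` fin A\<rparr>"

lemma rename_mpda_simps:
  "states (rename_mpda f A) = f ` states A" "inp (rename_mpda f A) = inp A"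
  "stk (rename_mpda f A) = f ` stk A"
  "trans (rename_mpda f A) =
     (\<lambda>(q, g, g', q'). (f q, map_option f g, map_option f g', f q')) ` trans A"
  "out (rename_mpda f A) = out A \<circ> inv_into (states A) f"
  "init (rename_mpda f A) = f ` init A" "fin (rename_mpda f A) = f ` fin A"
  unfolding rename_mpda_def by simp_all

context
  fixes A :: "('q, 'd, 'q) mpda" and f :: "'q \<Rightarrow> 'r"
  assumes mpda: "is_mpda A" and inj: "inj_on f (states A \<union> stk A)"
begin

private lemma trans_in_states:
  assumes "(q, g, g', q') \<in> trans A"
  shows "q \<in> states A" "q' \<in> states A" "set_option g \<subseteq> stk A" "set_option g' \<subseteq> stk A"
proof -
  have "trans A \<subseteq> states A \<times> insert None (Some ` stk A) \<times> insert None (Some ` stk A) \<times> states A"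
    using mpda unfolding is_mpda_def by blast
  with assms show "q \<in> states A" "q' \<in> states A" "set_option g \<subseteq> stk A" "set_option g' \<subseteq> stk A"
    by (cases g; cases g'; auto)+
qed

private lemma out_rename: "q \<in> states A \<Longrightarrow> out (rename_mpda f A) (f q) = out A q"
  using inj unfolding rename_mpda_simps by (simp add: inj_on_Un)

private lemma f_eq_iff: "x \<in> states A \<union> stk A \<Longrightarrow> y \<in> states A \<union> stk A \<Longrightarrow> f x = f y \<longleftrightarrow> x = y"
  using inj by (meson inj_on_eq_iff)

private lemma trans_renameE:
  assumes "(f q, h, h', k') \<in> trans (rename_mpda f A)" "q \<in> states A"
  obtains g g' q' where "(q, g, g', q') \<in> trans A" "h = map_option f g" "h' = map_option f g'"
    "k' = f q'"
proof -
  obtain q0 g g' q' where t: "(q0, g, g', q') \<in> trans A" "f q = f q0" "h = map_option f g"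
    "h' = map_option f g'" "k' = f q'"
    using assms(1) unfolding rename_mpda_simps by auto
  then have "q0 = q" using f_eq_iff assms(2) trans_in_states(1)[OF t(1)] by blast
  then show ?thesis using that[of g g' q'] t by simp
qed

private lemma map_option_f_eq_Some:
  "map_option f g = Some (f \<gamma>) \<Longrightarrow> set_option g \<subseteq> stk A \<Longrightarrow> \<gamma> \<in> stk A \<Longrightarrow> g = Some \<gamma>"
  using f_eq_iff by (cases g) auto

lemma pop_run_rename:
  "pop_run A q \<gamma> w q' \<Longrightarrow> pop_run (rename_mpda f A) (f q) (f \<gamma>) w (f q')"
proof (induction rule: pop_run.induct)
  case (pop q \<gamma> q')
  then have "(f q, Some (f \<gamma>), None, f q') \<in> trans (rename_mpda f A)"
    unfolding rename_mpda_simps by force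
  from pop_run.pop[OF this] show ?case
    using out_rename trans_in_states(1)[OF pop] by simp
next
  case (skip q q1 \<gamma> w q')
  then have "(f q, None, None, f q1) \<in> trans (rename_mpda f A)"
    unfolding rename_mpda_simps by force
  from pop_run.skip[OF this skip.IH] show ?case
    using out_rename trans_in_states(1)[OF skip.hyps(1)] by simp
next
  case (push q \<gamma>' q1 w1 q2 \<gamma> w2 q')
  then have "(f q, None, Some (f \<gamma>'), f q1) \<in> trans (rename_mpda f A)"
    unfolding rename_mpda_simps by force
  from pop_run.push[OF this push.IH] show ?case
    using out_rename trans_in_states(1)[OF push.hyps(1)] by simp
qed

lemma pop_run_target_in_states: "pop_run A q \<gamma> w q' \<Longrightarrow> q' \<in> states A"
  by (induction rule: pop_run.induct) (auto dest: trans_in_states)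

lemma pop_run_renameD:
  "pop_run (rename_mpda f A) k gk w k' \<Longrightarrow> k = f q \<Longrightarrow> gk = f \<gamma> \<Longrightarrow> q \<in> states A \<Longrightarrow>
    \<gamma> \<in> stk A \<Longrightarrow> \<exists>q'. k' = f q' \<and> pop_run A q \<gamma> w q'"
proof (induction arbitrary: q \<gamma> rule: pop_run.induct)
  case (pop k gk k')
  then obtain g q' where t: "(q, g, None, q') \<in> trans A" "Some (f \<gamma>) = map_option f g" "k' = f q'"
    by (auto elim: trans_renameE)
  then have "g = Some \<gamma>" using map_option_f_eq_Some trans_in_states(3) pop.prems(4) by metis
  with t have "pop_run A q \<gamma> [out A q] q'" by (auto intro: pop_run.pop)
  then show ?case using t(3) out_rename pop.prems by auto
next
  case (skip k k1 gk w k')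
  then obtain q1 where t: "(q, None, None, q1) \<in> trans A" "k1 = f q1"
    by (auto elim: trans_renameE)
  then obtain q' where "k' = f q'" "pop_run A q1 \<gamma> w q'"
    using skip.IH skip.prems trans_in_states(2) by blast
  moreover have "pop_run A q \<gamma> (out A q # w) q'" using pop_run.skip[OF t(1)] calculation(2) .
  ultimately show ?case using out_rename skip.prems by auto
next
  case (push k gk' k1 w1 k2 gk w2 k')
  then obtain g' q1 where t: "(q, None, g', q1) \<in> trans A" "Some gk' = map_option f g'" "k1 = f q1"
    by (auto elim: trans_renameE)
  then obtain \<gamma>' where \<gamma>': "g' = Some \<gamma>'" "gk' = f \<gamma>'" "\<gamma>' \<in> stk A"
    using t trans_in_states(4)[OF t(1)] by (cases g') auto
  obtain q2 where q2: "k2 = f q2" "pop_run A q1 \<gamma>' w1 q2"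
    using push.IH(1)[OF t(3) \<gamma>'(2)] trans_in_states(2)[OF t(1)] \<gamma>'(3) by blast
  obtain q' where q': "k' = f q'" "pop_run A q2 \<gamma> w2 q'"
    using push.IH(2)[OF q2(1) push.prems(2)] pop_run_target_in_states[OF q2(2)] push.prems(4)
    by blast
  have "pop_run A q \<gamma> (out A q # w1 @ w2) q'"
    using pop_run.push[OF _ q2(2) q'(2)] t(1) \<gamma>'(1) by simp
  then show ?case using q'(1) out_rename push.prems by auto
qed

private lemma no_swap: "\<forall>q g g' q'. (q, Some g, Some g', q') \<notin> trans A"
  using mpda unfolding is_mpda_def by blast

private lemma no_swap_rename: "\<forall>k h h' k'. (k, Some h, Some h', k') \<notin> trans (rename_mpda f A)"
proof (intro allI notI)
  fix k h h' k' assume "(k, Some h, Some h', k') \<in> trans (rename_mpda f A)"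
  then obtain q g g' q' where "(q, g, g', q') \<in> trans A" "Some h = map_option f g"
    "Some h' = map_option f g'"
    unfolding rename_mpda_simps by auto
  then show False using no_swap by (cases g; cases g') auto
qed

private lemma init_fin_in_states: "init A \<subseteq> states A" "fin A \<subseteq> states A"
  using mpda unfolding is_mpda_def by auto

lemma is_mpda_rename: "is_mpda (rename_mpda f A)"
proof -
  let ?B = "rename_mpda f A"
  have "trans ?B \<subseteq>
      states ?B \<times> insert None (Some ` stk ?B) \<times> insert None (Some ` stk ?B) \<times> states ?B"
  proof
    fix t assume "t \<in> trans ?B"
    then obtain q g g' q' where t: "(q, g, g', q') \<in> trans A"
      "t = (f q, map_option f g, map_option f g', f q')"
      unfolding rename_mpda_simps by auto
    show "t \<in> states ?B \<times> insert None (Some ` stk ?B) \<times> insert None (Some ` stk ?B) \<times> states ?B"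
      using trans_in_states[OF t(1)] t(2) unfolding rename_mpda_simps by (cases g; cases g') auto
  qed
  moreover have "out ?B ` states ?B \<subseteq> inp ?B"
    using mpda out_rename unfolding is_mpda_def rename_mpda_simps(1,2) by auto
  moreover have "finite (states ?B)" "finite (inp ?B)" "finite (stk ?B)"
    using mpda unfolding is_mpda_def rename_mpda_simps by auto
  moreover have "init ?B \<subseteq> states ?B" "fin ?B \<subseteq> states ?B"
    using init_fin_in_states unfolding rename_mpda_simps by auto
  ultimately show ?thesis
    using no_swap_rename unfolding is_mpda_def by blast
qed

lemma mpda_lang_rename: "mpda_lang (rename_mpda f A) = mpda_lang A"
proof (intro set_eqI iffI)
  fix x assume "x \<in> mpda_lang (rename_mpda f A)"
  then have "\<exists>k gk w kf. x = w @ [out (rename_mpda f A) kf] \<and> k \<in> init (rename_mpda f A) \<and>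
    gk \<in> stk (rename_mpda f A) \<and> kf \<in> fin (rename_mpda f A) \<and> pop_run (rename_mpda f A) k gk w kf"
    unfolding mpda_lang_eq_pop_runs[OF no_swap_rename] by simp
  then obtain k gk w kf where x: "x = w @ [out (rename_mpda f A) kf]" "k \<in> init (rename_mpda f A)"
    "gk \<in> stk (rename_mpda f A)" "kf \<in> fin (rename_mpda f A)"
    and run: "pop_run (rename_mpda f A) k gk w kf"
    by blast
  then obtain q \<gamma> qf where q: "q \<in> init A" "\<gamma> \<in> stk A" "qf \<in> fin A" "k = f q" "gk = f \<gamma>" "kf = f qf"
    unfolding rename_mpda_simps by blast
  obtain q' where q': "kf = f q'" "pop_run A q \<gamma> w q'"
    using pop_run_renameD[OF run q(4,5)] q(1,2) init_fin_in_states by blast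
  have "q' = qf"
    using f_eq_iff q(3,6) q'(1) pop_run_target_in_states[OF q'(2)] init_fin_in_states by blast
  moreover have "x = w @ [out A qf]"
    using x(1) q(3,6) out_rename init_fin_in_states by auto
  ultimately show "x \<in> mpda_lang A"
    unfolding mpda_lang_eq_pop_runs[OF no_swap] using q(1-3) q'(2) by blast
next
  fix x assume "x \<in> mpda_lang A"
  then obtain q \<gamma> w qf where x: "x = w @ [out A qf]" "q \<in> init A" "\<gamma> \<in> stk A" "qf \<in> fin A"
    and run: "pop_run A q \<gamma> w qf"
    unfolding mpda_lang_eq_pop_runs[OF no_swap] by blast
  have "x = w @ [out (rename_mpda f A) (f qf)]"
    using x(1,4) out_rename init_fin_in_states by auto
  moreover have "f q \<in> init (rename_mpda f A)" "f \<gamma> \<in> stk (rename_mpda f A)"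
    "f qf \<in> fin (rename_mpda f A)"
    using x unfolding rename_mpda_simps by auto
  ultimately show "x \<in> mpda_lang (rename_mpda f A)"
    unfolding mpda_lang_eq_pop_runs[OF no_swap_rename] using pop_run_rename[OF run] by blast
qed

lemma pop_normalized_rename:
  assumes "pop_normalized A"
  shows "pop_normalized (rename_mpda f A)"
proof -
  obtain ret where ret: "ret ` stk A \<subseteq> states A"
    "\<forall>q \<gamma> q'. (q, Some \<gamma>, None, q') \<in> trans A \<longrightarrow> q' = ret \<gamma>"
    using assms unfolding pop_normalized_def by blast
  have inv: "inv_into (stk A) f (f \<gamma>) = \<gamma>" if "\<gamma> \<in> stk A" for \<gamma>
    using inj that by (simp add: inj_on_Un)
  have "(k, Some gk, None, k') \<in> trans (rename_mpda f A) \<Longrightarrow> k' = (f \<circ> ret \<circ> inv_into (stk A) f) gk"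
    for k gk k'
  proof -
    assume "(k, Some gk, None, k') \<in> trans (rename_mpda f A)"
    then obtain q g q' where t: "(q, g, None, q') \<in> trans A" "Some gk = map_option f g" "k' = f q'"
      unfolding rename_mpda_simps by auto
    then obtain \<gamma> where "g = Some \<gamma>" "gk = f \<gamma>" "\<gamma> \<in> stk A"
      using trans_in_states(3)[OF t(1)] by (cases g) auto
    then show ?thesis using ret(2) inv t by auto
  qed
  moreover have "(f \<circ> ret \<circ> inv_into (stk A) f) ` stk (rename_mpda f A) \<subseteq> states (rename_mpda f A)"
    using ret(1) inv unfolding rename_mpda_simps by auto
  ultimately show ?thesis unfolding pop_normalized_def by blast
qed

end

lemma exists_nat_mpda:
  fixes A :: "('q, 'd, 'q) mpda"
  assumes "is_mpda A" "pop_normalized A"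
  shows "\<exists>B :: (nat, 'd, nat) mpda. is_mpda B \<and> pop_normalized B \<and> mpda_lang B = mpda_lang A"
proof -
  have "inj_on (to_nat_on (states A \<union> stk A)) (states A \<union> stk A)"
    using assms(1) unfolding is_mpda_def by (intro inj_on_to_nat_on countable_finite) auto
  then show ?thesis
    using is_mpda_rename mpda_lang_rename pop_normalized_rename assms by blast
qed

section \<open>An automaton for the spine language\<close>

text \<open>A state is a letter, which is its output, together with a mode. In mode \<open>Init b n\<close> the letter
  is \<open>\<alpha>\<^sub>n\<close> and the rest of the word is derived from \<open>b\<^sub>n\<close>; in mode \<open>Ctx X Y g\<close> the output still to
  come before the letter of the state on top of the stack is a context from \<open>X\<^sub>g\<close> to \<open>Y\<^sub>g\<close>. A push
  saves the state resuming the rest of a context after a subderivation; \<open>Final\<close> marks the bottom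
  of the stack, whose letter ends the word.\<close>

datatype 'n mode = Init 'n 'n | Ctx 'n 'n 'n | Final

type_synonym ('n, 'a, 's) state = "('n, 'a, 's) letter \<times> 'n mode"

fun resumable :: "'n mode \<Rightarrow> bool" where
  "resumable (Init b n) = False"
| "resumable _ = True"

inductive spine_trans :: "('n, 'a, 's) spine_grammar \<Rightarrow> ('n, 'a, 's) state \<Rightarrow>
    ('n, 'a, 's) state option \<Rightarrow> ('n, 'a, 's) state option \<Rightarrow> ('n, 'a, 's) state \<Rightarrow> bool"
  for G where
  pop_ctx: "spine_branch G X Y R \<Longrightarrow> spine_leaf G R g (snd l') \<Longrightarrow> fst l = Some (snd l') \<Longrightarrow>
    resumable K' \<Longrightarrow> spine_trans G (l, Ctx X Y g) (Some (l', K')) None (l', K')"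
| pop_init: "spine_leaf G b n (snd l') \<Longrightarrow> fst l = Some (snd l') \<Longrightarrow> resumable K' \<Longrightarrow>
    spine_trans G (l, Init b n) (Some (l', K')) None (l', K')"
| skip_up: "spine_branch G Z Y R \<Longrightarrow> spine_leaf G R g (snd l') \<Longrightarrow> fst l = Some (snd l') \<Longrightarrow>
    spine_trans G (l, Ctx X Y g) None None (l', Ctx X Z g)"
| skip_down: "spine_branch G X Y R \<Longrightarrow> spine_leaf G R' g (snd l') \<Longrightarrow> fst l = Some (snd l') \<Longrightarrow>
    spine_trans G (l, Ctx X Y g) None None (l', Ctx R R' g)"
| skip_init: "spine_leaf G R' n (snd l') \<Longrightarrow> fst l = Some (snd l') \<Longrightarrow>
    spine_trans G (l, Init b n) None None (l', Ctx b R' n)"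
| push: "spine_branch G Z Y R \<Longrightarrow> spine_leaf G R' g (snd l') \<Longrightarrow> fst l = Some (snd l') \<Longrightarrow>
    spine_trans G (l, Ctx X Y g) None (Some (l'', Ctx X Z g)) (l', Ctx R R' g)"

definition spine_nts :: "('n, 'a, 's) spine_grammar \<Rightarrow> 'n set" where
  "spine_nts G = nts0 G \<union> nts1 G"

definition spine_syms :: "('n, 'a, 's) spine_grammar \<Rightarrow> ('n, 'a, 's) sym set" where
  "spine_syms G = (\<lambda>(a, n). SymA a n) ` (term0 G \<times> spine_nts G)
     \<union> (\<lambda>(s, x, y). SymB s x y) ` (term2 G \<times> spine_nts G \<times> spine_nts G)"

definition spine_letters :: "('n, 'a, 's) spine_grammar \<Rightarrow> ('n, 'a, 's) letter set" where
  "spine_letters G = insert None (Some ` spine_syms G) \<times> spine_syms G"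

definition spine_modes :: "('n, 'a, 's) spine_grammar \<Rightarrow> 'n mode set" where
  "spine_modes G = (\<lambda>(b, n). Init b n) ` (spine_nts G \<times> spine_nts G)
     \<union> (\<lambda>(x, y, g). Ctx x y g) ` (spine_nts G \<times> spine_nts G \<times> spine_nts G) \<union> {Final}"

definition spine_states :: "('n, 'a, 's) spine_grammar \<Rightarrow> ('n, 'a, 's) state set" where
  "spine_states G = spine_letters G \<times> spine_modes G"

definition spine_mpda ::
  "('n, 'a, 's) spine_grammar \<Rightarrow>
    (('n, 'a, 's) state, ('n, 'a, 's) letter, ('n, 'a, 's) state) mpda" where
  "spine_mpda G = \<lparr>states = spine_states G, inp = spine_letters G, stk = spine_states G,
     trans = {(q, g, g', q'). q \<in> spine_states G \<and> q' \<in> spine_states G \<and>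
       set_option g \<subseteq> spine_states G \<and> set_option g' \<subseteq> spine_states G \<and> spine_trans G q g g' q'},
     out = fst,
     init = {q \<in> spine_states G. \<exists>a n b. snd q = Init b n \<and> snd (fst q) = SymA a n \<and>
       (n, SNt1 b (SLeaf a)) \<in> prods G},
     fin = {q \<in> spine_states G. snd q = Final \<and> fst (fst q) = None}\<rparr>"

lemma spine_mpda_simps:
  "states (spine_mpda G) = spine_states G" "inp (spine_mpda G) = spine_letters G"
  "stk (spine_mpda G) = spine_states G" "out (spine_mpda G) = fst"
  "(q, g, g', q') \<in> trans (spine_mpda G) \<longleftrightarrow> q \<in> spine_states G \<and> q' \<in> spine_states G \<and>
     set_option g \<subseteq> spine_states G \<and> set_option g' \<subseteq> spine_states G \<and> spine_trans G q g g' q'"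
  "init (spine_mpda G) = {q \<in> spine_states G. \<exists>a n b. snd q = Init b n \<and> snd (fst q) = SymA a n \<and>
       (n, SNt1 b (SLeaf a)) \<in> prods G}"
  "fin (spine_mpda G) = {q \<in> spine_states G. snd q = Final \<and> fst (fst q) = None}"
  unfolding spine_mpda_def by simp_all

text \<open>The letter of \<open>\<gamma>\<close> is output right after \<open>\<gamma>\<close> is popped, so it completes the word promised
  by the mode of \<open>q\<close>.\<close>

definition run_inv :: "('n, 'a, 's) spine_grammar \<Rightarrow> ('n, 'a, 's) state \<Rightarrow> ('n, 'a, 's) state \<Rightarrow>
    ('n, 'a, 's) letter list \<Rightarrow> bool" where
  "run_inv G q \<gamma> w \<longleftrightarrow> w \<noteq> [] \<and> hd w = fst q \<and> linked w (Some (snd (fst \<gamma>))) \<and>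
     (case snd q of
        Ctx X Y g \<Rightarrow> spine_context G X Y g (map snd (tl w) @ [snd (fst \<gamma>)])
      | Init b n \<Rightarrow> spine_derives G b n (map snd (tl w) @ [snd (fst \<gamma>)])
      | Final \<Rightarrow> False)"

lemma run_inv_pop:
  assumes "spine_trans G q (Some \<gamma>) None q'"
  shows "run_inv G q \<gamma> [fst q]"
  using assms
proof (cases rule: spine_trans.cases)
  case (pop_ctx X Y R g l' l K')
  from spine_context.step[OF spine_context.refl pop_ctx(4) spine_derives.leaf[OF pop_ctx(5)]]
  have "spine_context G X Y g ([snd l'] @ [])" .
  then show ?thesis using pop_ctx unfolding run_inv_def by simp
qed (auto simp: run_inv_def spine_derives.leaf)

lemma run_inv_skip:
  assumes "spine_trans G q None None q1" "run_inv G q1 \<gamma> w"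
  shows "run_inv G q \<gamma> (fst q # w)"
proof -
  have w: "w \<noteq> []" "hd w = fst q1" "linked w (Some (snd (fst \<gamma>)))"
    using assms(2) unfolding run_inv_def by auto
  let ?v = "map snd (tl w) @ [snd (fst \<gamma>)]"
  have tl: "map snd (tl (fst q # w)) @ [snd (fst \<gamma>)] = snd (fst q1) # ?v"
    using w by (cases w) auto
  from assms(1) show ?thesis
  proof (cases rule: spine_trans.cases)
    case (skip_up Z Y R g l' l X)
    then have "spine_context G X Y g ([snd l'] @ ?v)"
      using assms(2) spine_context.step[OF _ _ spine_derives.leaf] unfolding run_inv_def by auto
    then show ?thesis using skip_up w tl unfolding run_inv_def by (simp add: linked_Cons)
  next
    case (skip_down X Y R R' g l' l)
    then have "spine_derives G R g ([snd l'] @ ?v)"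
      using assms(2) spine_derives_context[OF _ spine_derives.leaf] unfolding run_inv_def by auto
    from spine_context.step[OF spine_context.refl skip_down(3) this]
    have "spine_context G X Y g (([snd l'] @ ?v) @ [])" .
    then show ?thesis using skip_down w tl unfolding run_inv_def by (simp add: linked_Cons)
  next
    case (skip_init R' n l' l b)
    then have "spine_derives G b n ([snd l'] @ ?v)"
      using assms(2) spine_derives_context[OF _ spine_derives.leaf] unfolding run_inv_def by auto
    then show ?thesis using skip_init w tl unfolding run_inv_def by (simp add: linked_Cons)
  qed
qed

lemma run_inv_push:
  assumes "spine_trans G q None (Some \<gamma>') q1" "run_inv G q1 \<gamma>' w1" "run_inv G \<gamma>' \<gamma> w2"
  shows "run_inv G q \<gamma> (fst q # w1 @ w2)"
proof -
  have w1: "w1 \<noteq> []" "hd w1 = fst q1" "linked w1 (Some (snd (fst \<gamma>')))"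
    using assms(2) unfolding run_inv_def by auto
  have w2: "w2 \<noteq> []" "hd w2 = fst \<gamma>'" "linked w2 (Some (snd (fst \<gamma>)))"
    using assms(3) unfolding run_inv_def by auto
  have linked: "linked (w1 @ w2) (Some (snd (fst \<gamma>)))"
    using linked_append[OF w2(1) _ w2(3)] w1(3) w2(2) by simp
  let ?v1 = "map snd (tl w1) @ [snd (fst \<gamma>')]" and ?v2 = "map snd (tl w2) @ [snd (fst \<gamma>)]"
  have tl: "map snd (tl (fst q # w1 @ w2)) @ [snd (fst \<gamma>)] = (snd (fst q1) # ?v1) @ ?v2"
    using w1 w2 by (cases w1; cases w2) auto
  from assms(1) show ?thesis
  proof (cases rule: spine_trans.cases)
    case (push Z Y R R' g l' l X l'')
    then have "spine_derives G R g ([snd l'] @ ?v1)" "spine_context G X Z g ?v2"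
      using assms(2,3) spine_derives_context[OF _ spine_derives.leaf] unfolding run_inv_def by auto
    from spine_context.step[OF this(2) push(4) this(1)]
    have "spine_context G X Y g (([snd l'] @ ?v1) @ ?v2)" .
    then show ?thesis using push w1 tl linked unfolding run_inv_def by (simp add: linked_Cons)
  qed
qed

lemma spine_trans_pop_target: "spine_trans G q (Some \<gamma>) None q' \<Longrightarrow> q' = \<gamma>"
  by (cases rule: spine_trans.cases) auto

lemma run_inv_if_pop_run:
  "pop_run (spine_mpda G) q \<gamma> w q' \<Longrightarrow> q' = \<gamma> \<and> run_inv G q \<gamma> w"
proof (induction rule: pop_run.induct)
  case (pop q \<gamma> q')
  then have t: "spine_trans G q (Some \<gamma>) None q'" by (simp add: spine_mpda_simps)
  show ?case
    using run_inv_pop[OF t] spine_trans_pop_target[OF t] by (simp add: spine_mpda_simps)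
next
  case (skip q q1 \<gamma> w q')
  then have "spine_trans G q None None q1" by (simp add: spine_mpda_simps)
  then show ?case using run_inv_skip skip.IH by (simp add: spine_mpda_simps) blast
next
  case (push q \<gamma>' q1 w1 q2 \<gamma> w2 q')
  then have "spine_trans G q None (Some \<gamma>') q1" by (simp add: spine_mpda_simps)
  then show ?case using run_inv_push push.IH by (simp add: spine_mpda_simps) blast
qed

definition emits ::
  "('n, 'a, 's) spine_grammar \<Rightarrow> ('n, 'a, 's) state \<Rightarrow> ('n, 'a, 's) state \<Rightarrow>
    ('n, 'a, 's) sym list \<Rightarrow> bool" where "emits G q \<gamma> xs \<longleftrightarrow> (\<exists>w. pop_run (spine_mpda G) q \<gamma> w \<gamma> \<and> map snd w = xs)"

lemma emits_pop:
  assumes "q \<in> spine_states G" "\<gamma> \<in> spine_states G" "spine_trans G q (Some \<gamma>) None \<gamma>"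
  shows "emits G q \<gamma> [snd (fst q)]"
proof -
  have "pop_run (spine_mpda G) q \<gamma> [fst q] \<gamma>"
    using pop_run.pop[of q \<gamma> \<gamma> "spine_mpda G"] assms by (simp add: spine_mpda_simps)
  then show ?thesis unfolding emits_def by (intro exI[of _ "[fst q]"]) simp
qed

lemma emits_skip:
  assumes "q \<in> spine_states G" "q1 \<in> spine_states G" "spine_trans G q None None q1"
    "emits G q1 \<gamma> xs"
  shows "emits G q \<gamma> (snd (fst q) # xs)"
proof -
  obtain w where "pop_run (spine_mpda G) q1 \<gamma> w \<gamma>" "map snd w = xs"
    using assms(4) unfolding emits_def by (elim exE conjE)
  moreover from this(1) have "pop_run (spine_mpda G) q \<gamma> (fst q # w) \<gamma>"
    using pop_run.skip[of q q1 "spine_mpda G"] assms(1-3) by (simp add: spine_mpda_simps)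
  ultimately show ?thesis unfolding emits_def by (intro exI[of _ "fst q # w"]) simp
qed

lemma emits_push:
  assumes "q \<in> spine_states G" "\<gamma>' \<in> spine_states G" "q1 \<in> spine_states G"
    "spine_trans G q None (Some \<gamma>') q1" "emits G q1 \<gamma>' xs" "emits G \<gamma>' \<gamma> ys"
  shows "emits G q \<gamma> (snd (fst q) # xs @ ys)"
proof -
  obtain w1 where w1: "pop_run (spine_mpda G) q1 \<gamma>' w1 \<gamma>'" "map snd w1 = xs"
    using assms(5) unfolding emits_def by (elim exE conjE)
  obtain w2 where w2: "pop_run (spine_mpda G) \<gamma>' \<gamma> w2 \<gamma>" "map snd w2 = ys"
    using assms(6) unfolding emits_def by (elim exE conjE)
  have "pop_run (spine_mpda G) q \<gamma> (fst q # w1 @ w2) \<gamma>"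
    using pop_run.push[of q \<gamma>' q1 "spine_mpda G", OF _ w1(1) w2(1)] assms(1-4)
    by (simp add: spine_mpda_simps)
  then show ?thesis
    using w1(2) w2(2) unfolding emits_def by (intro exI[of _ "fst q # w1 @ w2"]) simp
qed

lemma pop_normalized_spine_mpda: "pop_normalized (spine_mpda G)"
  unfolding pop_normalized_def
  by (intro exI[of _ id]) (auto simp: spine_mpda_simps dest: spine_trans_pop_target)

context normalized_spine_grammar
begin

lemma spine_leaf_mem:
  assumes "spine_leaf G R g \<theta>" "g \<in> spine_nts G"
  shows "R \<in> spine_nts G \<and> \<theta> \<in> spine_syms G"
  using assms(1) unfolding spine_leaf_def
proof (elim disjE exE conjE)
  fix s n' assume "(R, SBin s SHole (SNt0 n')) \<in> prods G" "\<theta> = SymB s g n'"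
  with left_prodD assms(2) show ?thesis
    unfolding spine_syms_def spine_nts_def by (fastforce intro!: image_eqI[of _ _ "(s, g, n')"])
next
  fix s n' assume "(R, SBin s (SNt0 n') SHole) \<in> prods G" "\<theta> = SymB s n' g"
  with right_prodD assms(2) show ?thesis
    unfolding spine_syms_def spine_nts_def by (fastforce intro!: image_eqI[of _ _ "(s, n', g)"])
qed

lemma spine_branch_mem: "spine_branch G Z Y R \<Longrightarrow> Z \<in> spine_nts G \<and> Y \<in> spine_nts G \<and> R \<in> spine_nts G"
  unfolding spine_branch_def spine_nts_def using branch_prodD by blast

lemma spine_derives_mem:
  "spine_derives G X g w \<Longrightarrow> g \<in> spine_nts G \<Longrightarrow> set w \<subseteq> spine_syms G \<and> X \<in> spine_nts G"
proof (induction rule: spine_derives.induct)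
  case (leaf X g \<theta>)
  then show ?case using spine_leaf_mem by simp
next
  case (branch X Y R g u v)
  then show ?case using spine_branch_mem[OF branch.hyps(1)] by simp
qed

lemma spine_context_mem:
  "spine_context G X Y g v \<Longrightarrow> X \<in> spine_nts G \<Longrightarrow> g \<in> spine_nts G \<Longrightarrow>
    set v \<subseteq> spine_syms G \<and> Y \<in> spine_nts G"
proof (induction rule: spine_context.induct)
  case (step X Z g v Y R u)
  then show ?case using spine_branch_mem[OF step.hyps(2)] spine_derives_mem[OF step.hyps(3)] by simp
qed simp

lemma Ctx_state_mem:
  assumes "v \<noteq> []" "set v \<subseteq> spine_syms G" "\<theta> \<in> spine_syms G" "X \<in> spine_nts G"
    "Y \<in> spine_nts G" "g \<in> spine_nts G"
  shows "((Some (hd v), \<theta>), Ctx X Y g) \<in> spine_states G"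
proof -
  have "hd v \<in> spine_syms G" using assms(1,2) hd_in_set by blast
  with assms(3-6) show ?thesis
    unfolding spine_states_def spine_letters_def spine_modes_def
    by (auto intro!: image_eqI[of _ _ "(X, Y, g)"])
qed

lemma Init_state_mem:
  "\<theta>' \<in> spine_syms G \<Longrightarrow> \<theta> \<in> spine_syms G \<Longrightarrow> b \<in> spine_nts G \<Longrightarrow> n \<in> spine_nts G \<Longrightarrow>
    ((Some \<theta>', \<theta>), Init b n) \<in> spine_states G"
  unfolding spine_states_def spine_letters_def spine_modes_def
  by (auto intro!: image_eqI[of _ _ "(b, n)"])

lemma Final_state_mem: "\<theta> \<in> spine_syms G \<Longrightarrow> ((None, \<theta>), Final) \<in> spine_states G"
  unfolding spine_states_def spine_letters_def spine_modes_def by auto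

lemma emits_from_context:
  assumes "spine_context G X Y g v" "v \<noteq> []" "X \<in> spine_nts G" "g \<in> spine_nts G"
    "\<theta> \<in> spine_syms G" "\<gamma> \<in> spine_states G" "snd (fst \<gamma>) = last v" "resumable (snd \<gamma>)"
  shows "emits G ((Some (hd v), \<theta>), Ctx X Y g) \<gamma> (\<theta> # butlast v)"
  using assms
proof (induction "length v" arbitrary: X Y v \<theta> \<gamma> rule: less_induct)
  case less
  obtain Z R R' \<theta>' u v' where v': "spine_context G X Z g v'" and br: "spine_branch G Z Y R"
    and leaf: "spine_leaf G R' g \<theta>'" and u: "spine_context G R R' g u" and v: "v = \<theta>' # u @ v'"
    using spine_context_first_leaf[OF less.prems(1,2)] by blast
  have mem: "Y \<in> spine_nts G" "Z \<in> spine_nts G" "R \<in> spine_nts G" "R' \<in> spine_nts G"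
    "\<theta>' \<in> spine_syms G" "set u \<subseteq> spine_syms G" "set v' \<subseteq> spine_syms G"
    using spine_branch_mem[OF br] spine_leaf_mem[OF leaf less.prems(4)]
      spine_context_mem[OF u _ less.prems(4)] spine_context_mem[OF v' less.prems(3,4)] by auto
  define q where "q = ((Some (hd v), \<theta>), Ctx X Y g)"
  have q: "q \<in> spine_states G"
    using Ctx_state_mem[OF less.prems(2) _ less.prems(5,3) mem(1) less.prems(4)] mem(5-7) v
    unfolding q_def by simp
  have IH_u: "emits G ((Some (hd u), \<theta>\<^sub>1), Ctx R R' g) \<gamma>\<^sub>1 (\<theta>\<^sub>1 # butlast u)"
    if "u \<noteq> []" "\<theta>\<^sub>1 \<in> spine_syms G" "\<gamma>\<^sub>1 \<in> spine_states G" "snd (fst \<gamma>\<^sub>1) = last u"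
      "resumable (snd \<gamma>\<^sub>1)" for \<theta>\<^sub>1 \<gamma>\<^sub>1
    using less.hyps[OF _ u that(1) mem(3) less.prems(4) that(2-5)] v by simp
  have IH_v': "emits G ((Some (hd v'), \<theta>\<^sub>1), Ctx X Z g) \<gamma> (\<theta>\<^sub>1 # butlast v')"
    if "v' \<noteq> []" "\<theta>\<^sub>1 \<in> spine_syms G" for \<theta>\<^sub>1
    using less.hyps[OF _ v' that(1) less.prems(3,4) that(2) less.prems(6) _ less.prems(8)]
      less.prems(7) v that(1) by simp
  consider (pop) "u = []" "v' = []" | (up) "u = []" "v' \<noteq> []" | (down) "u \<noteq> []" "v' = []"
    | (push) "u \<noteq> []" "v' \<noteq> []"
    by blast
  then show ?case
  proof cases
    case pop
    then have "spine_trans G q (Some \<gamma>) None \<gamma>"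
      using spine_trans.pop_ctx[OF br, of g "fst \<gamma>" "fst q" "snd \<gamma>"] leaf less.prems(7,8) v
        spine_context_Nil[OF u[unfolded pop(1)]] spine_context_Nil[OF v'[unfolded pop(2)]]
      unfolding q_def by simp
    from emits_pop[OF q less.prems(6) this] show ?thesis
      using pop v unfolding q_def by simp
  next
    case up
    define q1 where "q1 = ((Some (hd v'), \<theta>'), Ctx X Z g)"
    have "spine_trans G q None None q1"
      using spine_trans.skip_up[OF br, of g "fst q1" "fst q" X] leaf
        spine_context_Nil[OF u[unfolded up(1)]] v
      unfolding q_def q1_def by simp
    from emits_skip[OF q _ this] show ?thesis
      using Ctx_state_mem[OF up(2) mem(7,5) less.prems(3) mem(2) less.prems(4)]
        IH_v'[OF up(2) mem(5)] up v
      unfolding q_def q1_def by simp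
  next
    case down
    define q1 where "q1 = ((Some (hd u), \<theta>'), Ctx R R' g)"
    have "spine_trans G q None None q1"
      using spine_trans.skip_down[of G X Y R R' g "fst q1" "fst q"] br leaf v
        spine_context_Nil[OF v'[unfolded down(2)]]
      unfolding q_def q1_def by simp
    from emits_skip[OF q _ this] show ?thesis
      using Ctx_state_mem[OF down(1) mem(6,5,3,4) less.prems(4)]
        IH_u[OF down(1) mem(5) less.prems(6) _ less.prems(8)] less.prems(7) down v
      unfolding q_def q1_def by simp
  next
    case push
    define q1 where "q1 = ((Some (hd u), \<theta>'), Ctx R R' g)"
    define \<gamma>' where "\<gamma>' = ((Some (hd v'), last u), Ctx X Z g)"
    have "last u \<in> spine_syms G" using mem(6) push(1) by auto
    then have \<gamma>': "\<gamma>' \<in> spine_states G"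
      using Ctx_state_mem[OF push(2) mem(7) _ less.prems(3) mem(2) less.prems(4)]
      unfolding \<gamma>'_def by simp
    have q1: "q1 \<in> spine_states G"
      using Ctx_state_mem[OF push(1) mem(6,5,3,4) less.prems(4)] unfolding q1_def .
    have "spine_trans G q None (Some \<gamma>') q1"
      using spine_trans.push[where l = "fst q" and l' = "fst q1" and l'' = "fst \<gamma>'"] br leaf v
      unfolding q_def q1_def \<gamma>'_def by simp
    moreover have "emits G q1 \<gamma>' (\<theta>' # butlast u)"
      using IH_u[OF push(1) mem(5) \<gamma>'] unfolding q1_def \<gamma>'_def by simp
    moreover have "emits G \<gamma>' \<gamma> (last u # butlast v')"
      using IH_v'[OF push(2) \<open>last u \<in> spine_syms G\<close>] unfolding \<gamma>'_def .
    ultimately have "emits G q \<gamma> (snd (fst q) # (\<theta>' # butlast u) @ last u # butlast v')"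
      by (rule emits_push[OF q \<gamma>' q1])
    moreover have "(\<theta>' # butlast u) @ last u # butlast v' = butlast v"
      using push v by (simp add: butlast_append)
    ultimately show ?thesis unfolding q_def by (simp del: append.simps)
  qed
qed

lemma emits_from_init:
  assumes "spine_derives G b n u" "b \<in> spine_nts G" "n \<in> spine_nts G" "\<theta> \<in> spine_syms G"
    "\<gamma> \<in> spine_states G" "snd (fst \<gamma>) = last u" "resumable (snd \<gamma>)"
  shows "emits G ((Some (hd u), \<theta>), Init b n) \<gamma> (\<theta> # butlast u)"
proof -
  obtain R' \<theta>' u' where leaf: "spine_leaf G R' n \<theta>'" and ctx: "spine_context G b R' n u'"
    and u: "u = \<theta>' # u'"
    using spine_derives_leaf_context[OF assms(1)] by blast
  have mem: "R' \<in> spine_nts G" "\<theta>' \<in> spine_syms G" "set u' \<subseteq> spine_syms G"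
    using spine_leaf_mem[OF leaf assms(3)] spine_context_mem[OF ctx assms(2,3)] by auto
  define q where "q = ((Some (hd u), \<theta>), Init b n)"
  have q: "q \<in> spine_states G"
    using Init_state_mem mem assms(2-4) u unfolding q_def by auto
  show ?thesis
  proof (cases "u' = []")
    case True
    then have "spine_trans G q (Some \<gamma>) None \<gamma>"
      using spine_trans.pop_init[of G b n "fst \<gamma>" "fst q" "snd \<gamma>"] leaf
        spine_context_Nil[OF ctx[unfolded True]] assms(6,7) u
      unfolding q_def by simp
    from emits_pop[OF q assms(5) this] show ?thesis
      using True u unfolding q_def by simp
  next
    case False
    define q1 where "q1 = ((Some (hd u'), \<theta>'), Ctx b R' n)"
    have "spine_trans G q None None q1"
      unfolding q_def q1_def using leaf u by (auto intro: spine_trans.skip_init)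
    from emits_skip[OF q _ this] show ?thesis
      using Ctx_state_mem[OF False mem(3,2) assms(2) mem(1) assms(3)]
        emits_from_context[OF ctx False assms(2,3) mem(2) assms(5) _ assms(7)] assms(6) False u
      unfolding q_def q1_def by simp
  qed
qed

lemma no_swap_spine_mpda: "\<forall>q g g' q'. (q, Some g, Some g', q') \<notin> trans (spine_mpda G)"
  by (auto simp: spine_mpda_simps elim: spine_trans.cases)

lemma mpda_lang_spine_mpda_subset: "mpda_lang (spine_mpda G) \<subseteq> next_word ` spine_words_unary G"
proof
  fix x assume "x \<in> mpda_lang (spine_mpda G)"
  then obtain q \<gamma> w qf where x: "x = w @ [out (spine_mpda G) qf]" and q: "q \<in> init (spine_mpda G)"
    and qf: "qf \<in> fin (spine_mpda G)" and run: "pop_run (spine_mpda G) q \<gamma> w qf"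
    unfolding mpda_lang_eq_pop_runs[OF no_swap_spine_mpda] by blast
  have inv: "run_inv G q qf w" using run_inv_if_pop_run[OF run] by simp
  obtain a n b where mode: "snd q = Init b n" "snd (fst q) = SymA a n"
    and prod: "(n, SNt1 b (SLeaf a)) \<in> prods G"
    using q by (auto simp: spine_mpda_simps)
  have last: "fst (fst qf) = None" using qf by (simp add: spine_mpda_simps)
  define u where "u = map snd (tl w) @ [snd (fst qf)]"
  have w: "w \<noteq> []" "hd w = fst q" "linked w (Some (snd (fst qf)))" "spine_derives G b n u"
    using inv mode(1) unfolding run_inv_def u_def by auto
  have "linked (w @ [fst qf]) None"
    using linked_append[of "[fst qf]" w None] w(3) last by simp
  moreover have "map snd (w @ [fst qf]) = SymA a n # u"
    unfolding u_def using w(1,2) mode(2) by (cases w) auto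
  ultimately have "x = next_word (SymA a n # u)"
    using next_word_to_map_snd x by (metis next_word_eq spine_mpda_simps(4))
  moreover have "SymA a n # u \<in> spine_words_unary G"
    unfolding spine_words_unary_def using prod w(4) by blast
  ultimately show "x \<in> next_word ` spine_words_unary G" by blast
qed

lemma next_word_in_mpda_lang_spine_mpda:
  assumes "x \<in> spine_words_unary G"
  shows "next_word x \<in> mpda_lang (spine_mpda G)"
proof -
  obtain a n b u where x: "x = SymA a n # u" and prod: "(n, SNt1 b (SLeaf a)) \<in> prods G"
    and u: "spine_derives G b n u"
    using assms unfolding spine_words_unary_def by blast
  have nts: "n \<in> spine_nts G" "b \<in> spine_nts G" and a: "a \<in> term0 G"
    using unary_prodD[OF prod] unfolding spine_nts_def by auto
  have sym: "SymA a n \<in> spine_syms G"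
    using nts a unfolding spine_syms_def by blast
  have "u \<noteq> []" "set u \<subseteq> spine_syms G"
    using spine_derives_not_Nil[OF u] spine_derives_mem[OF u nts(1)] by auto
  then have ends: "hd u \<in> spine_syms G" "last u \<in> spine_syms G" by auto
  define q :: "('n, 'a, 's) state" where "q = ((Some (hd u), SymA a n), Init b n)"
  define \<gamma> :: "('n, 'a, 's) state" where "\<gamma> = ((None, last u), Final)"
  have q: "q \<in> init (spine_mpda G)"
    using Init_state_mem[OF ends(1) sym nts(2,1)] prod unfolding q_def
    by (auto simp: spine_mpda_simps)
  have \<gamma>: "\<gamma> \<in> spine_states G" "\<gamma> \<in> fin (spine_mpda G)"
    using Final_state_mem[OF ends(2)] unfolding \<gamma>_def by (auto simp: spine_mpda_simps)
  obtain w where run: "pop_run (spine_mpda G) q \<gamma> w \<gamma>" and w: "map snd w = SymA a n # butlast u"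
    using emits_from_init[OF u nts(2,1) sym \<gamma>(1)] unfolding emits_def q_def \<gamma>_def by auto
  have "linked w (Some (last u))"
    using run_inv_if_pop_run[OF run] unfolding run_inv_def \<gamma>_def by simp
  then have "linked (w @ [(None, last u)]) None"
    using linked_append[of "[(None, last u)]" w None] by simp
  moreover have "map snd (w @ [(None, last u)]) = x"
    using w x \<open>u \<noteq> []\<close> by simp
  ultimately have "next_word x = w @ [out (spine_mpda G) \<gamma>]"
    using next_word_to_map_snd unfolding \<gamma>_def spine_mpda_simps by (metis next_word_eq fst_conv)
  moreover have "\<gamma> \<in> stk (spine_mpda G)" using \<gamma>(1) by (simp add: spine_mpda_simps)
  ultimately show ?thesis
    unfolding mpda_lang_eq_pop_runs[OF no_swap_spine_mpda] using q \<gamma>(2) run by blast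
qed

lemma mpda_lang_spine_mpda: "mpda_lang (spine_mpda G) = next_word ` spine_words_unary G"
  using mpda_lang_spine_mpda_subset next_word_in_mpda_lang_spine_mpda by blast

lemma spine_mpda_union_short_words:
  "mpda_lang (spine_mpda G) \<union> {w \<in> Next (spine_lang G). length w = 1} = Next (spine_lang G)"
proof -
  have "length x = 1" if "x \<in> spine_words_leaf G" for x
    using that unfolding spine_words_leaf_def by auto
  moreover have "length x \<noteq> 1" if "x \<in> spine_words_unary G" for x
    using that spine_derives_not_Nil unfolding spine_words_unary_def by fastforce
  moreover have
    "Next (spine_lang G) = next_word ` spine_words_leaf G \<union> next_word ` spine_words_unary G"
    unfolding Next_def spine_lang_eq by auto
  ultimately show ?thesis
    unfolding mpda_lang_spine_mpda by (auto simp: next_word_eq)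
qed

lemma is_mpda_spine_mpda: "is_mpda (spine_mpda G)"
proof -
  have "finite (spine_nts G)" "finite (term0 G)" "finite (term2 G)"
    using normalized unfolding normalized_spine_def spine_nts_def by auto
  then have "finite (spine_syms G)" "finite (spine_modes G)"
    unfolding spine_syms_def spine_modes_def by auto
  then have "finite (spine_letters G)" "finite (spine_states G)"
    unfolding spine_letters_def spine_states_def by auto
  moreover have "trans (spine_mpda G) \<subseteq> spine_states G \<times> insert None (Some ` spine_states G) \<times>
      insert None (Some ` spine_states G) \<times> spine_states G"
  proof
    fix t assume t: "t \<in> trans (spine_mpda G)"
    obtain q g g' q' where "t = (q, g, g', q')" by (cases t) auto
    with t show "t \<in> spine_states G \<times> insert None (Some ` spine_states G) \<times>
      insert None (Some ` spine_states G) \<times> spine_states G"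
      by (cases g; cases g') (auto simp: spine_mpda_simps)
  qed
  ultimately show ?thesis
    using no_swap_spine_mpda unfolding is_mpda_def
    by (auto simp: spine_mpda_simps spine_states_def)
qed

end

section \<open>Derivation trees of spine grammars\<close>

text \<open>\<open>yields1 G b x t\<close>: the unary nonterminal \<open>b\<close> applied to the terminal tree \<open>x\<close> derives \<open>t\<close>.\<close>

inductive yields0 :: "('n, 'a, 's) spine_grammar \<Rightarrow> 'n \<Rightarrow> ('a, 's) btree \<Rightarrow> bool"
  and yields1 :: "('n, 'a, 's) spine_grammar \<Rightarrow> 'n \<Rightarrow> ('a, 's) btree \<Rightarrow> ('a, 's) btree \<Rightarrow> bool"
  for G where
  leaf: "(n, SLeaf a) \<in> prods G \<Longrightarrow> yields0 G n (Leaf a)"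
| unary: "(n, SNt1 b (SLeaf a)) \<in> prods G \<Longrightarrow> yields1 G b (Leaf a) t \<Longrightarrow> yields0 G n t"
| branch: "(b, SNt1 c1 (SNt1 c2 SHole)) \<in> prods G \<Longrightarrow> yields1 G c2 x y \<Longrightarrow> yields1 G c1 y t \<Longrightarrow>
    yields1 G b x t"
| left: "(b, SBin s SHole (SNt0 n')) \<in> prods G \<Longrightarrow> yields0 G n' t2 \<Longrightarrow> yields1 G b x (Node s x t2)"
| right: "(b, SBin s (SNt0 n') SHole) \<in> prods G \<Longrightarrow> yields0 G n' t1 \<Longrightarrow> yields1 G b x (Node s t1 x)"

fun sf_yields :: "('n, 'a, 's) spine_grammar \<Rightarrow> ('n, 'a, 's) sf \<Rightarrow> ('a, 's) btree \<Rightarrow> bool" where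
  "sf_yields G SHole t = False"
| "sf_yields G (SNt0 n) t = yields0 G n t"
| "sf_yields G (SNt1 b u) t = (\<exists>x. sf_yields G u x \<and> yields1 G b x t)"
| "sf_yields G (SLeaf a) t = (t = Leaf a)"
| "sf_yields G (SBin s l r) t = (\<exists>tl tr. t = Node s tl tr \<and> sf_yields G l tl \<and> sf_yields G r tr)"

lemma sf_yields_of_tree: "sf_yields G (of_tree t) t"
  by (induction t) auto

lemma gsteps_SNt1: "(gstep N0 N1 P)\<^sup>*\<^sup>* u v \<Longrightarrow> (gstep N0 N1 P)\<^sup>*\<^sup>* (SNt1 b u) (SNt1 b v)"
  by (induction rule: rtranclp_induct) (auto intro: rtranclp.rtrancl_into_rtrancl gstep.cong1)

lemma gsteps_SBin_left: "(gstep N0 N1 P)\<^sup>*\<^sup>* u v \<Longrightarrow> (gstep N0 N1 P)\<^sup>*\<^sup>* (SBin s u r) (SBin s v r)"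
  by (induction rule: rtranclp_induct) (auto intro: rtranclp.rtrancl_into_rtrancl gstep.congl)

lemma gsteps_SBin_right: "(gstep N0 N1 P)\<^sup>*\<^sup>* u v \<Longrightarrow> (gstep N0 N1 P)\<^sup>*\<^sup>* (SBin s l u) (SBin s l v)"
  by (induction rule: rtranclp_induct) (auto intro: rtranclp.rtrancl_into_rtrancl gstep.congr)

context normalized_spine_grammar
begin

lemma sf_yields_if_gstep:
  "gstep (nts0 G) (nts1 G) (prods G) u u' \<Longrightarrow> sf_yields G u' t \<Longrightarrow> sf_yields G u t"
proof (induction arbitrary: t rule: gstep.induct)
  case (nullary n r)
  from nullary.hyps(1) show ?case
  proof (cases rule: prods_cases)
    case (unary b a)
    with nullary show ?thesis by (auto intro: yields0_yields1.unary)
  qed (use nullary nts_disjoint in \<open>auto intro: yields0_yields1.leaf\<close>)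
next
  case (unary n r t0)
  from unary.hyps(1) show ?case
  proof (cases rule: prods_cases)
    case (branch b1 b2)
    with unary show ?thesis by (auto intro: yields0_yields1.branch)
  next
    case (left s a)
    with unary show ?thesis by (auto intro: yields0_yields1.left)
  next
    case (right s a)
    with unary show ?thesis by (auto intro: yields0_yields1.right)
  qed (use unary nts_disjoint in auto)
qed fastforce+

lemma yields_gsteps:
  "yields0 G n t \<Longrightarrow> (gstep (nts0 G) (nts1 G) (prods G))\<^sup>*\<^sup>* (SNt0 n) (of_tree t)"
  "yields1 G b x t \<Longrightarrow> (gstep (nts0 G) (nts1 G) (prods G))\<^sup>*\<^sup>* (SNt1 b (of_tree x)) (of_tree t)"
proof (induct rule: yields0_yields1.inducts)
  case (leaf n a)
  then show ?case using gstep.nullary[OF leaf] leaf_prodD by auto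
next
  case (unary n b a t)
  then have "gstep (nts0 G) (nts1 G) (prods G) (SNt0 n) (SNt1 b (of_tree (Leaf a)))"
    using gstep.nullary unary_prodD by fastforce
  from converse_rtranclp_into_rtranclp[OF this unary(3)] show ?case .
next
  case (branch b c1 c2 x y t)
  then have "gstep (nts0 G) (nts1 G) (prods G) (SNt1 b (of_tree x)) (SNt1 c1 (SNt1 c2 (of_tree x)))"
    using gstep.unary[OF branch(1), where t = "of_tree x"] branch_prodD by simp
  moreover have
    "(gstep (nts0 G) (nts1 G) (prods G))\<^sup>*\<^sup>* (SNt1 c1 (SNt1 c2 (of_tree x))) (SNt1 c1 (of_tree y))"
    using gsteps_SNt1[OF branch(3)] .
  ultimately show ?case using branch(5) by (meson converse_rtranclp_into_rtranclp rtranclp_trans)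
next
  case (left b s n' t2 x)
  then have "gstep (nts0 G) (nts1 G) (prods G) (SNt1 b (of_tree x)) (SBin s (of_tree x) (SNt0 n'))"
    using gstep.unary[OF left(1), where t = "of_tree x"] left_prodD by simp
  with gsteps_SBin_right[OF left(3)] show ?case by (simp add: converse_rtranclp_into_rtranclp)
next
  case (right b s n' t1 x)
  then have "gstep (nts0 G) (nts1 G) (prods G) (SNt1 b (of_tree x)) (SBin s (SNt0 n') (of_tree x))"
    using gstep.unary[OF right(1), where t = "of_tree x"] right_prodD by simp
  with gsteps_SBin_left[OF right(3)] show ?case by (simp add: converse_rtranclp_into_rtranclp)
qed

lemma tree_lang_eq_yields0: "tree_lang G = {t. yields0 G (start G) t}"
proof -
  have "sf_yields G u t" if "(gstep (nts0 G) (nts1 G) (prods G))\<^sup>*\<^sup>* u (of_tree t)" for u t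
    using that by (induction rule: converse_rtranclp_induct)
      (auto intro: sf_yields_of_tree sf_yields_if_gstep)
  then show ?thesis
    unfolding tree_lang_def grammar_step_def using yields_gsteps(1) by fastforce
qed

end

section \<open>Assembling trees along spine words\<close>

lemma attach_rev_mono: "T \<subseteq> T' \<Longrightarrow> attach_rev d T w \<subseteq> attach_rev d T' w"
proof (induction d T w rule: attach_rev.induct)
  case (5 d T s' s n1 n2 y ys)
  then have "attach_rev d T (y # ys) \<subseteq> attach_rev d T' (y # ys)" by blast
  with 5(3) show ?case by (auto split: if_splits)
qed auto

lemma attach_mono: "T \<subseteq> T' \<Longrightarrow> attach d T w \<subseteq> attach d T' w"
  unfolding attach_def by (rule attach_rev_mono)

lemma Fcal_least: "\<forall>w\<in>L. attach d F w \<subseteq> F \<Longrightarrow> Fcal d L \<subseteq> F"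
  unfolding Fcal_def by blast

lemma Fcal_closed: "w \<in> L \<Longrightarrow> attach d (Fcal d L) w \<subseteq> Fcal d L"
proof -
  assume w: "w \<in> L"
  have "attach d (Fcal d L) w \<subseteq> F" if F: "\<forall>w\<in>L. attach d F w \<subseteq> F" for F
    using attach_mono[OF Fcal_least[OF F]] F w by blast
  then show ?thesis unfolding Fcal_def[of d L] by blast
qed

lemma attach_SymA: "attach d T (next_word_to [SymA a n] e) = {Leaf ((e, a), n)}"
  unfolding attach_def by simp

lemma attach_snoc_SymB:
  assumes "p \<noteq> []"
  shows "attach d T (next_word_to (p @ [SymB s n1 n2]) e) =
    {Node ((e, s), n1, n2) t1 t2 | t1 t2.
        if d s = 1 then t1 \<in> attach d T (next_word_to p (Some (SymB s n1 n2))) \<and> t2 \<in> T \<and> tgen d t2 = n2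
        else t2 \<in> attach d T (next_word_to p (Some (SymB s n1 n2))) \<and> t1 \<in> T \<and> tgen d t1 = n1}"
proof -
  have split: "next_word_to (p @ [SymB s n1 n2]) e =
      next_word_to p (Some (SymB s n1 n2)) @ [(e, SymB s n1 n2)]"
    using next_word_to_append[of "[SymB s n1 n2]" p e] by simp
  obtain y ys where "rev (next_word_to p (Some (SymB s n1 n2))) = y # ys"
    using assms
    by (cases "rev (next_word_to p (Some (SymB s n1 n2)))") (auto simp: next_word_to_def)
  then show ?thesis unfolding attach_def split by simp
qed

definition strip_ann :: "('n, 'a, 's) ftree \<Rightarrow> ('a, 's) btree" where
  "strip_ann = map_btree (\<lambda>x. snd (fst x)) (\<lambda>x. snd (fst x))"

lemma strip_ann_simps[simp]:
  "strip_ann (Leaf x) = Leaf (snd (fst x))"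
  "strip_ann (Node y l r) = Node (snd (fst y)) (strip_ann l) (strip_ann r)"
  unfolding strip_ann_def by simp_all

text \<open>In \<open>attach_extends d F u g x t\<close>, \<open>p\<close> is any nonempty word already read, which attaches to a tree
  for \<open>x\<close>; continuing it by the spine word \<open>u\<close> attaches to a tree for \<open>t\<close> with generator \<open>g\<close>.\<close>

definition attach_extends :: "('s \<Rightarrow> nat) \<Rightarrow> ('n, 'a, 's) ftree set \<Rightarrow> ('n, 'a, 's) sym list \<Rightarrow> 'n \<Rightarrow>
    ('a, 's) btree \<Rightarrow> ('a, 's) btree \<Rightarrow> bool" where
  "attach_extends d F u g x t \<longleftrightarrow>
     (\<forall>p e tx. p \<noteq> [] \<longrightarrow> tx \<in> attach d F (next_word_to p (Some (hd u))) \<longrightarrow> strip_ann tx = x \<longrightarrow>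
       (\<exists>t' \<in> attach d F (next_word_to (p @ u) e). strip_ann t' = t \<and> tgen d t' = g))"

lemma attach_extends_append:
  assumes "attach_extends d F u2 g x y" "attach_extends d F u1 g y t" "u2 \<noteq> []"
  shows "attach_extends d F (u2 @ u1) g x t"
  unfolding attach_extends_def
proof (intro allI impI)
  fix p e tx assume p: "p \<noteq> []" and tx: "tx \<in> attach d F (next_word_to p (Some (hd (u2 @ u1))))"
    "strip_ann tx = x"
  have "tx \<in> attach d F (next_word_to p (Some (hd u2)))" using tx(1) assms(3) by simp
  then obtain ty where ty: "ty \<in> attach d F (next_word_to (p @ u2) (Some (hd u1)))"
    "strip_ann ty = y"
    using assms(1)[unfolded attach_extends_def, rule_format, OF p _ tx(2)] by blast
  have "p @ u2 \<noteq> []" using p by simp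
  then obtain t' where "t' \<in> attach d F (next_word_to ((p @ u2) @ u1) e)" "strip_ann t' = t"
    "tgen d t' = g"
    using assms(2)[unfolded attach_extends_def, rule_format, OF _ ty] by blast
  then show "\<exists>t' \<in> attach d F (next_word_to (p @ u2 @ u1) e). strip_ann t' = t \<and> tgen d t' = g"
    by auto
qed

definition attach_realizes ::
  "('n, 'a, 's) spine_grammar \<Rightarrow> ('s \<Rightarrow> nat) \<Rightarrow> ('n, 'a, 's) ftree set \<Rightarrow> 'n \<Rightarrow> ('a, 's) btree \<Rightarrow>
    ('a, 's) btree \<Rightarrow> bool" where
  "attach_realizes G d F b x t \<longleftrightarrow> (\<forall>g. \<exists>u. spine_derives G b g u \<and> attach_extends d F u g x t)"

lemma attach_realizes_branch:
  assumes "(b, SNt1 c1 (SNt1 c2 SHole)) \<in> prods G"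
    "attach_realizes G d F c2 x y" "attach_realizes G d F c1 y t"
  shows "attach_realizes G d F b x t"
  unfolding attach_realizes_def
proof
  fix g
  obtain u2 where u2: "spine_derives G c2 g u2" "attach_extends d F u2 g x y"
    using assms(2) unfolding attach_realizes_def by blast
  obtain u1 where u1: "spine_derives G c1 g u1" "attach_extends d F u1 g y t"
    using assms(3) unfolding attach_realizes_def by blast
  have "spine_derives G b g (u2 @ u1)"
    using spine_derives.branch[OF _ u2(1) u1(1)] assms(1) unfolding spine_branch_def by blast
  moreover have "attach_extends d F (u2 @ u1) g x t"
    using attach_extends_append[OF u2(2) u1(2) spine_derives_not_Nil[OF u2(1)]] .
  ultimately show "\<exists>u. spine_derives G b g u \<and> attach_extends d F u g x t" by blast
qed

context normalized_spine_grammar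
begin

lemma attach_spine_leaf_sound:
  assumes "spine_leaf G X g \<theta>" "p \<noteq> []" "t' \<in> attach d F (next_word_to (p @ [\<theta>]) e)"
    and F: "F \<subseteq> {t. yields0 G (tgen d t) (strip_ann t)}"
  shows "(\<exists>tx \<in> attach d F (next_word_to p (Some \<theta>)). yields1 G X (strip_ann tx) (strip_ann t')) \<and>
    tgen d t' = g"
  using assms(1) unfolding spine_leaf_def
proof (elim disjE exE conjE)
  fix s n' assume prod: "(X, SBin s SHole (SNt0 n')) \<in> prods G" and \<theta>: "\<theta> = SymB s g n'"
  have "d s = 1" using left_prodD[OF prod] by simp
  then obtain t1 t2 where t': "t' = Node ((e, s), g, n') t1 t2"
    and t1: "t1 \<in> attach d F (next_word_to p (Some \<theta>))" and t2: "t2 \<in> F" "tgen d t2 = n'"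
    using assms(3) unfolding \<theta> attach_snoc_SymB[OF assms(2)] by auto
  have "yields1 G X (strip_ann t1) (strip_ann t')"
    using yields0_yields1.left[OF prod] F t2 t' by auto
  then show ?thesis using t1 t' \<open>d s = 1\<close> by auto
next
  fix s n' assume prod: "(X, SBin s (SNt0 n') SHole) \<in> prods G" and \<theta>: "\<theta> = SymB s n' g"
  have "d s = 2" using right_prodD[OF prod] by simp
  then obtain t1 t2 where t': "t' = Node ((e, s), n', g) t1 t2"
    and t2: "t2 \<in> attach d F (next_word_to p (Some \<theta>))" and t1: "t1 \<in> F" "tgen d t1 = n'"
    using assms(3) unfolding \<theta> attach_snoc_SymB[OF assms(2)] by auto
  have "yields1 G X (strip_ann t2) (strip_ann t')"
    using yields0_yields1.right[OF prod] F t1 t' by auto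
  then show ?thesis using t2 t' \<open>d s = 2\<close> by auto
qed

lemma attach_spine_word_sound:
  "spine_derives G b g u \<Longrightarrow> p \<noteq> [] \<Longrightarrow> t' \<in> attach d F (next_word_to (p @ u) e) \<Longrightarrow>
    F \<subseteq> {t. yields0 G (tgen d t) (strip_ann t)} \<Longrightarrow>
    (\<exists>tx \<in> attach d F (next_word_to p (Some (hd u))). yields1 G b (strip_ann tx) (strip_ann t')) \<and>
    tgen d t' = g"
proof (induction arbitrary: p e t' rule: spine_derives.induct)
  case (leaf X g \<theta>)
  then show ?case using attach_spine_leaf_sound by simp
next
  case (branch X Y R g u1 u2)
  have "u1 \<noteq> []" using spine_derives_not_Nil[OF branch.hyps(2)] .
  have "t' \<in> attach d F (next_word_to ((p @ u1) @ u2) e)" using branch.prems(2) by simp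
  then obtain ty where ty: "ty \<in> attach d F (next_word_to (p @ u1) (Some (hd u2)))"
    "yields1 G R (strip_ann ty) (strip_ann t')" and g: "tgen d t' = g"
    using branch.IH(2)[OF _ _ branch.prems(3)] branch.prems(1) by blast
  obtain tx where tx: "tx \<in> attach d F (next_word_to p (Some (hd u1)))"
    "yields1 G Y (strip_ann tx) (strip_ann ty)"
    using branch.IH(1)[OF branch.prems(1) ty(1) branch.prems(3)] by blast
  have "yields1 G X (strip_ann tx) (strip_ann t')"
    using yields0_yields1.branch[OF _ tx(2) ty(2)] branch.hyps(1) unfolding spine_branch_def
    by blast
  then show ?case using tx(1) g \<open>u1 \<noteq> []\<close> by auto
qed

lemma Fcal_Next_sound: "Fcal d (Next (spine_lang G)) \<subseteq> {t. yields0 G (tgen d t) (strip_ann t)}"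
proof (rule Fcal_least, rule ballI)
  let ?F = "{t. yields0 G (tgen d t) (strip_ann t)}"
  fix w assume "w \<in> Next (spine_lang G)"
  then obtain x where w: "w = next_word_to x None"
    and x: "x \<in> spine_words_leaf G \<union> spine_words_unary G"
    unfolding Next_def spine_lang_eq next_word_eq by blast
  show "attach d ?F w \<subseteq> ?F"
  proof
    fix t assume t: "t \<in> attach d ?F w"
    from x show "t \<in> ?F"
    proof
      assume "x \<in> spine_words_leaf G"
      then obtain a n where x: "x = [SymA a n]" and prod: "(n, SLeaf a) \<in> prods G"
        unfolding spine_words_leaf_def by blast
      have "t = Leaf ((None, a), n)" using t unfolding w x attach_SymA by simp
      then show ?thesis using yields0_yields1.leaf[OF prod] by simp
    next
      assume "x \<in> spine_words_unary G"
      then obtain a n b u where x: "x = [SymA a n] @ u" and prod: "(n, SNt1 b (SLeaf a)) \<in> prods G"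
        and u: "spine_derives G b n u"
        unfolding spine_words_unary_def by auto
      obtain tx where "tx \<in> attach d ?F (next_word_to [SymA a n] (Some (hd u)))"
        and "yields1 G b (strip_ann tx) (strip_ann t)" and "tgen d t = n"
        using attach_spine_word_sound[OF u _ t[unfolded w x]] by auto
      then show ?thesis using yields0_yields1.unary[OF prod] unfolding attach_SymA by auto
    qed
  qed
qed


lemma attach_realizes_left:
  assumes "(b, SBin s SHole (SNt0 n')) \<in> prods G" "t2 \<in> F" "tgen d t2 = n'"
  shows "attach_realizes G d F b x (Node s x (strip_ann t2))"
  unfolding attach_realizes_def
proof
  fix g
  have "d s = 1" using left_prodD[OF assms(1)] by simp
  have "attach_extends d F [SymB s g n'] g x (Node s x (strip_ann t2))"
    unfolding attach_extends_def
  proof (intro allI impI)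
    fix p e tx assume p: "p \<noteq> []"
      and tx: "tx \<in> attach d F (next_word_to p (Some (hd [SymB s g n'])))"
      "strip_ann tx = x"
    have "Node ((e, s), g, n') tx t2 \<in> attach d F (next_word_to (p @ [SymB s g n']) e)"
      unfolding attach_snoc_SymB[OF p] using tx(1) assms(2,3) \<open>d s = 1\<close> by simp
    then show "\<exists>t' \<in> attach d F (next_word_to (p @ [SymB s g n']) e).
        strip_ann t' = Node s x (strip_ann t2) \<and> tgen d t' = g"
      using tx(2) \<open>d s = 1\<close> by force
  qed
  moreover have "spine_derives G b g [SymB s g n']"
    using assms(1) by (auto intro: spine_derives.leaf simp: spine_leaf_def)
  ultimately show "\<exists>u. spine_derives G b g u \<and> attach_extends d F u g x (Node s x (strip_ann t2))"
    by blast
qed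

lemma attach_realizes_right:
  assumes "(b, SBin s (SNt0 n') SHole) \<in> prods G" "t1 \<in> F" "tgen d t1 = n'"
  shows "attach_realizes G d F b x (Node s (strip_ann t1) x)"
  unfolding attach_realizes_def
proof
  fix g
  have "d s = 2" using right_prodD[OF assms(1)] by simp
  have "attach_extends d F [SymB s n' g] g x (Node s (strip_ann t1) x)"
    unfolding attach_extends_def
  proof (intro allI impI)
    fix p e tx assume p: "p \<noteq> []"
      and tx: "tx \<in> attach d F (next_word_to p (Some (hd [SymB s n' g])))"
      "strip_ann tx = x"
    have "Node ((e, s), n', g) t1 tx \<in> attach d F (next_word_to (p @ [SymB s n' g]) e)"
      unfolding attach_snoc_SymB[OF p] using tx(1) assms(2,3) \<open>d s = 2\<close> by simp
    then show "\<exists>t' \<in> attach d F (next_word_to (p @ [SymB s n' g]) e).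
        strip_ann t' = Node s (strip_ann t1) x \<and> tgen d t' = g"
      using tx(2) \<open>d s = 2\<close> by force
  qed
  moreover have "spine_derives G b g [SymB s n' g]"
    using assms(1) by (auto intro: spine_derives.leaf simp: spine_leaf_def)
  ultimately show "\<exists>u. spine_derives G b g u \<and> attach_extends d F u g x (Node s (strip_ann t1) x)"
    by blast
qed

lemma Fcal_Next_complete:
  "yields0 G n t \<Longrightarrow> \<exists>t' \<in> Fcal d (Next (spine_lang G)). tgen d t' = n \<and> strip_ann t' = t"
  "yields1 G b x t \<Longrightarrow> attach_realizes G d (Fcal d (Next (spine_lang G))) b x t"
proof (induct rule: yields0_yields1.inducts)
  case (leaf n a)
  then have "next_word_to [SymA a n] None \<in> Next (spine_lang G)"
    unfolding Next_def spine_lang_eq spine_words_leaf_def next_word_eq by blast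
  from Fcal_closed[OF this] have "Leaf ((None, a), n) \<in> Fcal d (Next (spine_lang G))"
    unfolding attach_SymA by simp
  then show ?case by force
next
  case (unary n b a t)
  let ?F = "Fcal d (Next (spine_lang G))"
  obtain u where u: "spine_derives G b n u" and ext: "attach_extends d ?F u n (Leaf a) t"
    using unary(3) unfolding attach_realizes_def by blast
  have "Leaf ((Some (hd u), a), n) \<in> attach d ?F (next_word_to [SymA a n] (Some (hd u)))"
    unfolding attach_SymA by simp
  from ext[unfolded attach_extends_def, rule_format, OF _ this, where e = None]
  obtain t' where t': "t' \<in> attach d ?F (next_word_to ([SymA a n] @ u) None)"
    "strip_ann t' = t" "tgen d t' = n"
    by auto
  have "SymA a n # u \<in> spine_lang G"
    using unary(1) u unfolding spine_lang_eq spine_words_unary_def by blast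
  then have "next_word_to ([SymA a n] @ u) None \<in> Next (spine_lang G)"
    unfolding Next_def next_word_eq by simp
  from Fcal_closed[OF this] t' show ?case by auto
next
  case (branch b c1 c2 x y t)
  show ?case by (rule attach_realizes_branch[OF branch(1,3,5)])
next
  case (left b s n' t2 x)
  then obtain t2' where "t2' \<in> Fcal d (Next (spine_lang G))" "tgen d t2' = n'" "strip_ann t2' = t2"
    by blast
  with attach_realizes_left[OF left(1)] show ?case by metis
next
  case (right b s n' t1 x)
  then obtain t1' where "t1' \<in> Fcal d (Next (spine_lang G))" "tgen d t1' = n'" "strip_ann t1' = t1"
    by blast
  with attach_realizes_right[OF right(1)] show ?case by metis
qed

lemma strip_ann_Fcal_S_Next: "strip_ann ` Fcal_S d (start G) (Next (spine_lang G)) = tree_lang G"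
proof (intro set_eqI iffI)
  fix t assume "t \<in> strip_ann ` Fcal_S d (start G) (Next (spine_lang G))"
  then obtain t' where "t' \<in> Fcal d (Next (spine_lang G))" "tgen d t' = start G" "t = strip_ann t'"
    unfolding Fcal_S_def by blast
  with Fcal_Next_sound show "t \<in> tree_lang G" unfolding tree_lang_eq_yields0 by auto
next
  fix t assume "t \<in> tree_lang G"
  then obtain t' where "t' \<in> Fcal d (Next (spine_lang G))" "tgen d t' = start G" "strip_ann t' = t"
    using Fcal_Next_complete(1) unfolding tree_lang_eq_yields0 by blast
  then show "t \<in> strip_ann ` Fcal_S d (start G) (Next (spine_lang G))"
    unfolding Fcal_S_def by blast
qed

end

theorem corollary6p7:
  fixes G :: "('n, 'a, 's) spine_grammar" and d :: "'s \<Rightarrow> nat"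
  assumes "normalized_spine G d"
  shows "\<exists>A :: (nat, ('n, 'a, 's) letter, nat) mpda.
           is_mpda A \<and> pop_normalized A \<and>
           mpda_lang A \<union> {w \<in> Next (spine_lang G). length w = 1} = Next (spine_lang G) \<and>
           (\<exists>\<rho>0 \<rho>2. map_btree \<rho>0 \<rho>2 `
              Fcal_S d (start G) (mpda_lang A \<union> {w \<in> Next (spine_lang G). length w = 1})
              = tree_lang G)"
proof -
  interpret normalized_spine_grammar G d by unfold_locales (rule assms)
  obtain A :: "(nat, ('n, 'a, 's) letter, nat) mpda" where A: "is_mpda A" "pop_normalized A"
    and lang: "mpda_lang A = mpda_lang (spine_mpda G)"
    using exists_nat_mpda[OF is_mpda_spine_mpda pop_normalized_spine_mpda] by blast
  have Next: "mpda_lang A \<union> {w \<in> Next (spine_lang G). length w = 1} = Next (spine_lang G)"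
    unfolding lang by (rule spine_mpda_union_short_words)
  have "map_btree (\<lambda>x. snd (fst x)) (\<lambda>x. snd (fst x)) ` Fcal_S d (start G) (Next (spine_lang G))
      = tree_lang G"
    using strip_ann_Fcal_S_Next unfolding strip_ann_def .
  then show ?thesis
    using A Next by (intro exI[of _ A]) (simp only: Next, blast)
qed

end
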